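(* Let $\alpha\in(0,1)$ and $F\in C^\infty(\mathbb{S}^1_{2\pi}\times(0,\infty))$. Let $(X,\nu)\in C([0,\infty);C^1(\mathbb{S}^1_{2\pi};\mathbb{R}^2\times\mathbb{S}^1))\cap C^\infty(\mathbb{S}^1_{2\pi}\times(0,\infty);\mathbb{R}^2\times\mathbb{S}^1)$ be an inverse curvature flow starting from $(X_0,\nu_0)\in C^{1+\alpha}(\mathbb{S}^1_{2\pi};\mathbb{R}^2\times\mathbb{S}^1)$, with $(X_0,\nu_0)$ $\ell$-convex, whose tangent velocity satisfies $T=\partial_u\beta/\ell^2 + F\beta$ on $\mathbb{S}^1_{2\pi}\times(0,\infty)$. Then there exist $n\in\mathbb{N}$ and $\phi\in C([0,\infty);C^1(\mathbb{S}^1_{2\pi};\mathbb{S}^1_{2\pi}))\cap C^\infty(\mathbb{S}^1_{2\pi}\times(0,\infty);\mathbb{S}^1_{2\pi})$ with $\phi(\cdot,0)=\phi_0$ a $C^1$-diffeomorphism belonging to $C^{1+\alpha}$, such that $\phi(\cdot,t)$ is a diffeomorphism of $\mathbb{S}^1_{2\pi}$ for every $t\ge0$ and the reparametrized flow $(\tilde X(u,t),\tilde\nu(u,t)) := (X(\phi(u,t),t),\nu(\phi(u,t),t))$ satisfies $$\tilde\nu(u,0)=(\sin(nu),-\cos(nu))^\top\ (u\in\mathbb{S}^1_{2\pi}),\qquad \partial_t\tilde X = \frac{\tilde\beta}{\tilde\ell}\tilde\nu + \frac{\partial_u\tilde\beta}{\tilde\ell^2}\tilde\mu\ \text{ on }\mathbb{S}^1_{2\pi}\times(0,\infty),$$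 where $\tilde\mu=J\tilde\nu$ and $(\tilde\ell,\tilde\beta)$ is the Legendre curvature of $(\tilde X,\tilde\nu)$.
   Context: $\mathbb{S}^1_{2\pi}=\mathbb{R}/2\pi\mathbb{Z}$, $\mathbb{S}^1$ the unit circle, $J$ anticlockwise rotation by $\pi/2$. A Legendre curve is a $C^1$ pair $(X,\nu):\mathbb{S}^1_{2\pi}\to\mathbb{R}^2\times\mathbb{S}^1$ with $\langle\partial_uX,\nu\rangle=0$; $\mu=J\nu$; Legendre curvature $\ell=\langle\partial_u\nu,\mu\rangle$, $\beta=\langle\partial_uX,\mu\rangle$; $\ell$-convex means $\ell>0$. A flow of Legendre curves has time slices that are Legendre curves; normal velocity $N=\langle\partial_tX,\nu\rangle$, tangent velocity $T=\langle\partial_tX,\mu\rangle$. An inverse curvature flow is a flow of Legendre curves, smooth for $t>0$, whose slices are $\ell$-convex for $t>0$ and with $N=\beta/\ell$ for $t>0$. *)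

theory Defs
  imports "HOL-Analysis.Analysis"
begin

text \<open>The plane R^2 is identified with the complex numbers (inner product
  is the real inner product of complex numbers), J is multiplication by the imaginary
  unit. Functions on S^1_{2pi} are 2pi-periodic functions on the reals.\<close>

definition Jrot :: "complex \<Rightarrow> complex" where
  "Jrot z = \<i> * z"

definition du :: "(real \<Rightarrow> real \<Rightarrow> 'b::real_normed_vector) \<Rightarrow> real \<Rightarrow> real \<Rightarrow> 'b" where
  "du f u t = vector_derivative (\<lambda>v. f v t) (at u)"

definition dt :: "(real \<Rightarrow> real \<Rightarrow> 'b::real_normed_vector) \<Rightarrow> real \<Rightarrow> real \<Rightarrow> 'b" where
  "dt f u t = vector_derivative (\<lambda>s. f u s) (at t)"

text \<open>Smoothness on a set of the (u,t)-plane: all iterated partial derivatives exist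
  and are continuous. Direction False = u, True = t.\<close>
definition line2 :: "bool \<Rightarrow> real \<times> real \<Rightarrow> real \<Rightarrow> real \<times> real" where
  "line2 d p s = (if d then (fst p, s) else (s, snd p))"

definition coord2 :: "bool \<Rightarrow> real \<times> real \<Rightarrow> real" where
  "coord2 d p = (if d then snd p else fst p)"

definition pd2 :: "bool \<Rightarrow> (real \<times> real \<Rightarrow> 'b::real_normed_vector) \<Rightarrow> real \<times> real \<Rightarrow> 'b" where
  "pd2 d g p = vector_derivative (\<lambda>s. g (line2 d p s)) (at (coord2 d p))"

definition iter_pd2 :: "bool list \<Rightarrow> (real \<times> real \<Rightarrow> 'b::real_normed_vector) \<Rightarrow> real \<times> real \<Rightarrow> 'b" where
  "iter_pd2 ds g = foldr pd2 ds g"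

definition smooth_on2 :: "(real \<times> real) set \<Rightarrow> (real \<times> real \<Rightarrow> 'b::real_normed_vector) \<Rightarrow> bool" where
  "smooth_on2 S g \<longleftrightarrow>
     (\<forall>ds. continuous_on S (iter_pd2 ds g) \<and>
       (\<forall>d. \<forall>p\<in>S. (\<lambda>s. iter_pd2 ds g (line2 d p s)) differentiable (at (coord2 d p))))"

definition smooth_flow :: "(real \<Rightarrow> real \<Rightarrow> 'b::real_normed_vector) \<Rightarrow> bool" where
  "smooth_flow f \<longleftrightarrow> smooth_on2 (UNIV \<times> {0<..}) (\<lambda>(u,t). f u t)"

text \<open>f in C([0,infinity); C^1(S^1)): each slice is C^1 and f, du f are jointly continuous
  on S^1 x [0,infinity) (equivalent by compactness of S^1).\<close>
definition C0C1_flow :: "(real \<Rightarrow> real \<Rightarrow> 'b::real_normed_vector) \<Rightarrow> bool" where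
  "C0C1_flow f \<longleftrightarrow>
     (\<forall>t\<ge>0. \<forall>u. (\<lambda>v. f v t) differentiable (at u)) \<and>
     continuous_on (UNIV \<times> {0..}) (\<lambda>(u,t). f u t) \<and>
     continuous_on (UNIV \<times> {0..}) (\<lambda>(u,t). du f u t)"

definition periodic_flow :: "(real \<Rightarrow> real \<Rightarrow> 'b) \<Rightarrow> bool" where
  "periodic_flow f \<longleftrightarrow> (\<forall>t\<ge>0. \<forall>u. f (u + 2*pi) t = f u t)"

definition holder :: "real \<Rightarrow> (real \<Rightarrow> 'b::real_normed_vector) \<Rightarrow> bool" where
  "holder a f \<longleftrightarrow> (\<exists>C. \<forall>x y. norm (f x - f y) \<le> C * \<bar>x - y\<bar> powr a)"

definition C1alpha :: "real \<Rightarrow> (real \<Rightarrow> 'b::real_normed_vector) \<Rightarrow> bool" where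
  "C1alpha a f \<longleftrightarrow> (\<forall>u. f differentiable (at u)) \<and>
     continuous_on UNIV (\<lambda>u. vector_derivative f (at u)) \<and>
     holder a (\<lambda>u. vector_derivative f (at u))"

definition leg_ell :: "(real \<Rightarrow> real \<Rightarrow> complex) \<Rightarrow> real \<Rightarrow> real \<Rightarrow> real" where
  "leg_ell \<nu> u t = du \<nu> u t \<bullet> Jrot (\<nu> u t)"

definition leg_beta :: "(real \<Rightarrow> real \<Rightarrow> complex) \<Rightarrow> (real \<Rightarrow> real \<Rightarrow> complex) \<Rightarrow> real \<Rightarrow> real \<Rightarrow> real" where
  "leg_beta X \<nu> u t = du X u t \<bullet> Jrot (\<nu> u t)"

definition legendre_flow :: "(real \<Rightarrow> real \<Rightarrow> complex) \<Rightarrow> (real \<Rightarrow> real \<Rightarrow> complex) \<Rightarrow> bool" where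
  "legendre_flow X \<nu> \<longleftrightarrow>
     periodic_flow X \<and> periodic_flow \<nu> \<and> C0C1_flow X \<and> C0C1_flow \<nu> \<and>
     (\<forall>t\<ge>0. \<forall>u. norm (\<nu> u t) = 1 \<and> du X u t \<bullet> \<nu> u t = 0)"

definition inverse_curvature_flow :: "(real \<Rightarrow> real \<Rightarrow> complex) \<Rightarrow> (real \<Rightarrow> real \<Rightarrow> complex) \<Rightarrow> bool" where
  "inverse_curvature_flow X \<nu> \<longleftrightarrow>
     legendre_flow X \<nu> \<and> smooth_flow X \<and> smooth_flow \<nu> \<and>
     (\<forall>t>0. \<forall>u. leg_ell \<nu> u t > 0 \<and>
        dt X u t \<bullet> \<nu> u t = leg_beta X \<nu> u t / leg_ell \<nu> u t)"

end

theory Submission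
  imports Defs
begin

text \<open>Write the unit normal as \<open>\<nu> = cis \<theta>\<close> with a continuous angle \<open>\<theta>\<close> on
  \<open>S\<^sup>1 \<times> [0, \<infinity>)\<close>. Since \<open>\<partial>\<^sub>u \<theta> = \<ell> > 0\<close>, every \<open>\<theta>(\<cdot>, t)\<close> is increasing, and
  \<open>\<theta>(u + 2\<pi>, t) - \<theta>(u, t) = 2\<pi>n\<close> for an integer \<open>n \<ge> 1\<close> (the rotation index) that does not
  depend on \<open>(u, t)\<close> by continuity. Reparametrising each time slice by
  \<open>\<phi>(u, t) = \<theta>(\<cdot>, t)\<^sup>-\<^sup>1(n u - \<pi>/2)\<close> makes the normal \<open>(sin nu, -cos nu)\<close>
  independent of \<open>t\<close>, so the new Legendre curvature is the constant \<open>n\<close>. The normal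
  component of the new velocity is then \<open>\<beta>/\<ell>\<close>, and differentiating it in \<open>u\<close>, with the
  Legendre condition differentiated in \<open>t\<close> and the symmetry of mixed derivatives, identifies
  the tangential component as \<open>\<partial>\<^sub>u \<beta>/\<ell>\<^sup>2\<close>. The implicit function theorem makes \<open>\<phi>\<close>
  smooth for \<open>t > 0\<close>, and \<open>\<phi>(\<cdot>, 0)\<close> is \<open>C\<^sup>1\<^sup>+\<^sup>\<alpha>\<close> because \<open>\<partial>\<^sub>u \<phi> = n/\<ell>(\<phi>)\<close> with
  \<open>\<ell>(\<cdot>, 0)\<close> positive and \<open>\<alpha>\<close>-Hoelder.\<close>

section \<open>Partial derivatives on open subsets of the plane\<close>

definition partially_differentiable_on ::
    "(real \<times> real) set \<Rightarrow> (real \<times> real \<Rightarrow> 'b::real_normed_vector) \<Rightarrow> bool" where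
  "partially_differentiable_on S g \<longleftrightarrow>
     (\<forall>d. \<forall>p\<in>S. (\<lambda>s. g (line2 d p s)) differentiable (at (coord2 d p)))"

lemma iter_pd2_Nil [simp]: "iter_pd2 [] g = g"
  by (simp add: iter_pd2_def)

lemma iter_pd2_Cons: "iter_pd2 (d # ds) g = pd2 d (iter_pd2 ds g)"
  by (simp add: iter_pd2_def)

lemma iter_pd2_snoc: "iter_pd2 (ds @ [d]) g = iter_pd2 ds (pd2 d g)"
  by (simp add: iter_pd2_def)

lemma line2_coord2 [simp]: "line2 d p (coord2 d p) = p"
  by (cases p) (auto simp: line2_def coord2_def)

lemma dist_line2: "dist (line2 d p s) p = dist s (coord2 d p)"
  by (cases p) (auto simp: line2_def coord2_def dist_Pair_Pair dist_real_def)

lemma line2_False [simp]: "line2 False (u, t) s = (s, t)"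
  and line2_True [simp]: "line2 True (u, t) s = (u, s)"
  and coord2_False [simp]: "coord2 False (u, t) = u"
  and coord2_True [simp]: "coord2 True (u, t) = t"
  by (simp_all add: line2_def coord2_def)

lemma du_eq_pd2: "du f u t = pd2 False (case_prod f) (u, t)"
  by (simp add: du_def pd2_def)

lemma dt_eq_pd2: "dt f u t = pd2 True (case_prod f) (u, t)"
  by (simp add: dt_def pd2_def)

lemma smooth_on2_iff:
  "smooth_on2 S g \<longleftrightarrow>
     continuous_on S g \<and> partially_differentiable_on S g \<and> (\<forall>d. smooth_on2 S (pd2 d g))"
proof
  assume g: "smooth_on2 S g"
  then have "smooth_on2 S (pd2 d g)" for d
    unfolding smooth_on2_def by (metis iter_pd2_snoc)
  with g show "continuous_on S g \<and> partially_differentiable_on S g \<and> (\<forall>d. smooth_on2 S (pd2 d g))"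
    unfolding smooth_on2_def partially_differentiable_on_def by (metis iter_pd2_Nil)
next
  assume g: "continuous_on S g \<and> partially_differentiable_on S g \<and> (\<forall>d. smooth_on2 S (pd2 d g))"
  show "smooth_on2 S g"
    unfolding smooth_on2_def
  proof
    fix ds :: "bool list"
    show "continuous_on S (iter_pd2 ds g) \<and>
        (\<forall>d. \<forall>p\<in>S. (\<lambda>s. iter_pd2 ds g (line2 d p s)) differentiable at (coord2 d p))"
      using g by (cases ds rule: rev_exhaust)
        (auto simp: partially_differentiable_on_def smooth_on2_def iter_pd2_snoc)
  qed
qed

lemma smooth_on2D:
  assumes "smooth_on2 S g"
  shows "continuous_on S g" "partially_differentiable_on S g" "smooth_on2 S (pd2 d g)"
  using assms smooth_on2_iff by blast+

lemma eventually_line2_in_open: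
  assumes "open S" "p \<in> S"
  shows "eventually (\<lambda>s. line2 d p s \<in> S) (nhds (coord2 d p))"
proof -
  obtain e where "e > 0" "ball p e \<subseteq> S"
    using assms openE by blast
  then show ?thesis
    unfolding eventually_nhds_metric by (metis dist_commute dist_line2 mem_ball subsetD)
qed

lemma eventually_line2_cong_open:
  assumes "open S" "p \<in> S" "\<And>q. q \<in> S \<Longrightarrow> g q = h q"
  shows "eventually (\<lambda>s. g (line2 d p s) = h (line2 d p s)) (nhds (coord2 d p))"
  using eventually_line2_in_open[OF assms(1,2)] by (rule eventually_mono) (rule assms(3))

lemma pd2_cong_open:
  assumes "open S" "p \<in> S" "\<And>q. q \<in> S \<Longrightarrow> g q = h q"
  shows "pd2 d g p = pd2 d h p"
  unfolding pd2_def using eventually_line2_cong_open[OF assms, where d=d]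
  by (intro vector_derivative_cong_eq) (auto elim: eventually_mono)

lemma pd2_const_on_open:
  assumes "open S" "p \<in> S" "\<And>q. q \<in> S \<Longrightarrow> g q = c"
  shows "pd2 d g p = 0"
  using pd2_cong_open[OF assms(1,2), of g "\<lambda>_. c"] assms(3) by (simp add: pd2_def)

lemma differentiable_line2_cong_open:
  assumes "open S" "p \<in> S" "\<And>q. q \<in> S \<Longrightarrow> g q = h q"
    and "(\<lambda>s. g (line2 d p s)) differentiable (at (coord2 d p))"
  shows "(\<lambda>s. h (line2 d p s)) differentiable (at (coord2 d p))"
proof -
  obtain D where "((\<lambda>s. g (line2 d p s)) has_vector_derivative D) (at (coord2 d p))"
    using assms(4) vector_derivative_works by blast
  moreover have "eventually (\<lambda>s. s \<in> UNIV \<longrightarrow> g (line2 d p s) = h (line2 d p s)) (nhds (coord2 d p))"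
    using eventually_line2_cong_open[OF assms(1-3), where d=d] by (auto elim: eventually_mono)
  ultimately have "((\<lambda>s. h (line2 d p s)) has_vector_derivative D) (at (coord2 d p))"
    using has_vector_derivative_cong_ev assms(2,3) by (metis line2_coord2)
  then show ?thesis
    using differentiableI_vector by blast
qed

lemma smooth_on2_coinduct:
  assumes S: "open S" and "P g"
    and step: "\<And>g. P g \<Longrightarrow> continuous_on S g \<and> partially_differentiable_on S g \<and>
                 (\<forall>d. \<exists>h. P h \<and> (\<forall>p\<in>S. pd2 d g p = h p))"
  shows "smooth_on2 S g"
proof -
  have iter: "\<exists>h. P h \<and> (\<forall>p\<in>S. iter_pd2 ds g p = h p)" if "P g" for ds g
    using that
  proof (induction ds arbitrary: g)
    case Nil
    then show ?case by auto
  next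
    case (Cons d ds)
    then obtain h where h: "P h" "\<forall>p\<in>S. iter_pd2 ds g p = h p" by blast
    then obtain h' where h': "P h'" "\<forall>p\<in>S. pd2 d h p = h' p" using step by blast
    have "\<forall>p\<in>S. iter_pd2 (d # ds) g p = h' p"
      using h h' pd2_cong_open[OF S, of _ "iter_pd2 ds g" h d] by (simp add: iter_pd2_Cons)
    with h' show ?case by blast
  qed
  show ?thesis
    unfolding smooth_on2_def
  proof (intro allI conjI ballI)
    fix ds
    obtain h where h: "P h" "\<forall>p\<in>S. iter_pd2 ds g p = h p"
      using iter \<open>P g\<close> by blast
    show "continuous_on S (iter_pd2 ds g)"
      using step[OF h(1)] h(2) continuous_on_cong by (metis (mono_tags, lifting))
    fix d p assume "p \<in> S"
    then show "(\<lambda>s. iter_pd2 ds g (line2 d p s)) differentiable at (coord2 d p)"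
      using differentiable_line2_cong_open[OF S \<open>p \<in> S\<close>, of h "iter_pd2 ds g" d] step[OF h(1)] h(2)
      unfolding partially_differentiable_on_def by auto
  qed
qed

lemma has_vector_derivative_pd2:
  assumes "partially_differentiable_on S g" "p \<in> S"
  shows "((\<lambda>s. g (line2 d p s)) has_vector_derivative pd2 d g p) (at (coord2 d p))"
  using assms vector_derivative_works unfolding partially_differentiable_on_def pd2_def by blast

lemma has_real_derivative_pd2:
  fixes g :: "real \<times> real \<Rightarrow> real"
  assumes "partially_differentiable_on S g" "p \<in> S"
  shows "((\<lambda>s. g (line2 d p s)) has_real_derivative pd2 d g p) (at (coord2 d p))"
  using has_vector_derivative_pd2[OF assms] by (simp add: has_real_derivative_iff_has_vector_derivative)

lemma pd2_eqI:
  assumes "((\<lambda>s. g (line2 d p s)) has_vector_derivative D) (at (coord2 d p))"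
  shows "pd2 d g p = D"
  using assms unfolding pd2_def by (rule vector_derivative_at)

lemma smooth_on2_from_partials:
  assumes S: "open S" and "continuous_on S g"
    and der: "\<And>d p. p \<in> S \<Longrightarrow> ((\<lambda>s. g (line2 d p s)) has_vector_derivative G d p) (at (coord2 d p))"
    and "\<And>d. smooth_on2 S (G d)"
  shows "smooth_on2 S g"
proof (rule smooth_on2_coinduct[where P="\<lambda>h. h = g \<or> smooth_on2 S h"])
  fix h assume "h = g \<or> smooth_on2 S h"
  then show "continuous_on S h \<and> partially_differentiable_on S h \<and>
      (\<forall>d. \<exists>h'. (h' = g \<or> smooth_on2 S h') \<and> (\<forall>p\<in>S. pd2 d h p = h' p))"
  proof
    assume "h = g"
    moreover have "partially_differentiable_on S g"
      unfolding partially_differentiable_on_def using der differentiableI_vector by blast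
    moreover have "\<forall>p\<in>S. pd2 d g p = G d p" for d
      using der pd2_eqI by blast
    ultimately show ?thesis using assms by blast
  next
    assume "smooth_on2 S h"
    then show ?thesis
      using smooth_on2D[of S h] by blast
  qed
qed (use S in auto)

lemma smooth_on2_const: "open S \<Longrightarrow> smooth_on2 S (\<lambda>_. c)"
  by (rule smooth_on2_coinduct[where P="\<lambda>g. \<exists>c. g = (\<lambda>_. c)"])
    (auto simp: partially_differentiable_on_def pd2_def)

lemma smooth_on2_fst: "open S \<Longrightarrow> smooth_on2 S fst"
  by (rule smooth_on2_from_partials[where G="\<lambda>d _. if d then 0 else 1"])
    (auto simp: line2_def coord2_def smooth_on2_const continuous_on_fst)

lemma (in bounded_bilinear) sum_list_prod_partials:
  assumes "\<forall>(a, b)\<in>set L. smooth_on2 S a \<and> smooth_on2 S b"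
  shows "continuous_on S (\<lambda>x. \<Sum>(a, b)\<leftarrow>L. prod (a x) (b x)) \<and>
    (\<forall>d. \<forall>p\<in>S. ((\<lambda>s. \<Sum>(a, b)\<leftarrow>L. prod (a (line2 d p s)) (b (line2 d p s)))
       has_vector_derivative
         (\<Sum>(a, b)\<leftarrow>concat (map (\<lambda>(a, b). [(a, pd2 d b), (pd2 d a, b)]) L). prod (a p) (b p)))
       (at (coord2 d p)))"
  using assms
proof (induction L)
  case (Cons ab L)
  obtain a b where ab: "ab = (a, b)" by fastforce
  have a: "smooth_on2 S a" and b: "smooth_on2 S b"
    using Cons.prems ab by auto
  have "((\<lambda>s. prod (a (line2 d p s)) (b (line2 d p s)) +
        (\<Sum>(a, b)\<leftarrow>L. prod (a (line2 d p s)) (b (line2 d p s))))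
      has_vector_derivative (prod (a p) (pd2 d b p) + prod (pd2 d a p) (b p)) +
        (\<Sum>(a, b)\<leftarrow>concat (map (\<lambda>(a, b). [(a, pd2 d b), (pd2 d a, b)]) L). prod (a p) (b p)))
      (at (coord2 d p))" if "p \<in> S" for d p
    using has_vector_derivative[OF has_vector_derivative_pd2[OF smooth_on2D(2)[OF a] that]
        has_vector_derivative_pd2[OF smooth_on2D(2)[OF b] that]] Cons that
    by (intro has_vector_derivative_add) auto
  then show ?case
    using Cons ab continuous_on[OF smooth_on2D(1)[OF a] smooth_on2D(1)[OF b]]
    by (auto intro!: continuous_on_add simp: add.assoc)
qed auto

lemma (in bounded_bilinear) smooth_on2_sum_list_prod:
  assumes S: "open S" and L: "\<forall>(a, b)\<in>set L. smooth_on2 S a \<and> smooth_on2 S b"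
  shows "smooth_on2 S (\<lambda>x. \<Sum>(a, b)\<leftarrow>L. prod (a x) (b x))"
proof (rule smooth_on2_coinduct[OF S, where P="\<lambda>h. \<exists>L. (\<forall>(a, b)\<in>set L. smooth_on2 S a \<and> smooth_on2 S b) \<and>
     h = (\<lambda>x. \<Sum>(a, b)\<leftarrow>L. prod (a x) (b x))"])
  fix g assume "\<exists>L. (\<forall>(a, b)\<in>set L. smooth_on2 S a \<and> smooth_on2 S b) \<and>
     g = (\<lambda>x. \<Sum>(a, b)\<leftarrow>L. prod (a x) (b x))"
  then obtain L where L: "\<forall>(a, b)\<in>set L. smooth_on2 S a \<and> smooth_on2 S b"
    and g: "g = (\<lambda>x. \<Sum>(a, b)\<leftarrow>L. prod (a x) (b x))"
    by blast
  note partials = sum_list_prod_partials[OF L]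
  have "partially_differentiable_on S g"
    unfolding partially_differentiable_on_def g
    using partials by (auto simp: case_prod_unfold intro: differentiableI_vector)
  moreover have "\<exists>L'. (\<forall>(a, b)\<in>set L'. smooth_on2 S a \<and> smooth_on2 S b) \<and>
      (\<forall>p\<in>S. pd2 d g p = (\<Sum>(a, b)\<leftarrow>L'. prod (a p) (b p)))" for d
  proof (intro exI conjI)
    let ?L = "concat (map (\<lambda>(a, b). [(a, pd2 d b), (pd2 d a, b)]) L)"
    show "\<forall>(a, b)\<in>set ?L. smooth_on2 S a \<and> smooth_on2 S b"
      using L by (auto simp: smooth_on2D(3))
    show "\<forall>p\<in>S. pd2 d g p = (\<Sum>(a, b)\<leftarrow>?L. prod (a p) (b p))"
      using partials g by (auto intro!: pd2_eqI simp: case_prod_unfold)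
  qed
  ultimately show "continuous_on S g \<and> partially_differentiable_on S g \<and>
      (\<forall>d. \<exists>h. (\<exists>L. (\<forall>(a, b)\<in>set L. smooth_on2 S a \<and> smooth_on2 S b) \<and>
         h = (\<lambda>x. \<Sum>(a, b)\<leftarrow>L. prod (a x) (b x))) \<and> (\<forall>p\<in>S. pd2 d g p = h p))"
    using partials g by fastforce
qed (use L in blast)

lemma (in bounded_bilinear) smooth_on2_prod:
  "open S \<Longrightarrow> smooth_on2 S f \<Longrightarrow> smooth_on2 S g \<Longrightarrow> smooth_on2 S (\<lambda>x. prod (f x) (g x))"
  using smooth_on2_sum_list_prod[of S "[(f, g)]"] by simp

lemma smooth_on2_scaleR:
  "open S \<Longrightarrow> smooth_on2 S f \<Longrightarrow> smooth_on2 S g \<Longrightarrow> smooth_on2 S (\<lambda>x. f x *\<^sub>R g x)"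
  by (rule bounded_bilinear.smooth_on2_prod[OF bounded_bilinear_scaleR])

lemma smooth_on2_mult:
  fixes f g :: "real \<times> real \<Rightarrow> 'a::real_normed_algebra"
  shows "open S \<Longrightarrow> smooth_on2 S f \<Longrightarrow> smooth_on2 S g \<Longrightarrow> smooth_on2 S (\<lambda>x. f x * g x)"
  by (rule bounded_bilinear.smooth_on2_prod[OF bounded_bilinear_mult])

lemma smooth_on2_inner:
  fixes f g :: "real \<times> real \<Rightarrow> 'a::real_inner"
  shows "open S \<Longrightarrow> smooth_on2 S f \<Longrightarrow> smooth_on2 S g \<Longrightarrow> smooth_on2 S (\<lambda>x. f x \<bullet> g x)"
  by (rule bounded_bilinear.smooth_on2_prod[OF bounded_bilinear_inner])

lemma smooth_on2_add:
  assumes "open S" "smooth_on2 S f" "smooth_on2 S g"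
  shows "smooth_on2 S (\<lambda>x. f x + g x)"
  using bounded_bilinear.smooth_on2_sum_list_prod[OF bounded_bilinear_scaleR assms(1),
      of "[(\<lambda>_. 1, f), (\<lambda>_. 1, g)]"] assms smooth_on2_const[OF assms(1), of 1]
  by simp

lemma smooth_on2_uminus:
  assumes "open S" "smooth_on2 S f"
  shows "smooth_on2 S (\<lambda>x. - f x)"
  using smooth_on2_scaleR[OF assms(1) smooth_on2_const[OF assms(1), of "-1"] assms(2)] by simp

text \<open>The reciprocal of a smooth function is handled like products: derivatives of
  \<open>\<Sum> a\<^sub>k (1/f)\<^sup>k\<close> with smooth \<open>a\<^sub>k\<close> are again of this form.\<close>

lemma sum_list_power_inverse_partials:
  fixes f :: "real \<times> real \<Rightarrow> real"
  assumes f: "smooth_on2 S f" "\<And>x. x \<in> S \<Longrightarrow> f x \<noteq> 0"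
    and L: "\<forall>(a, k)\<in>set L. smooth_on2 S a"
  shows "continuous_on S (\<lambda>x. \<Sum>(a, k)\<leftarrow>L. a x * (1 / f x) ^ k) \<and>
    (\<forall>d. \<forall>p\<in>S. ((\<lambda>s. \<Sum>(a, k)\<leftarrow>L. a (line2 d p s) * (1 / f (line2 d p s)) ^ k)
       has_real_derivative
         (\<Sum>(a, k)\<leftarrow>concat (map (\<lambda>(a, k). [(pd2 d a, k), (\<lambda>x. - real k * a x * pd2 d f x, Suc k)]) L).
            a p * (1 / f p) ^ k))
       (at (coord2 d p)))"
  using L
proof (induction L)
  case (Cons ak L)
  obtain a k where ak: "ak = (a, k)" by fastforce
  have a: "smooth_on2 S a"
    using Cons.prems ak by auto
  have "((\<lambda>s. a (line2 d p s) * (1 / f (line2 d p s)) ^ k) has_real_derivative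
      pd2 d a p * (1 / f p) ^ k + (- real k * a p * pd2 d f p) * (1 / f p) ^ Suc k) (at (coord2 d p))"
    if p: "p \<in> S" for d p
  proof -
    have "((\<lambda>s. 1 / f (line2 d p s)) has_real_derivative - pd2 d f p * (1 / f p) ^ 2) (at (coord2 d p))"
      using DERIV_inverse_fun[OF has_real_derivative_pd2[OF smooth_on2D(2)[OF f(1)] p]] f(2)[OF p]
      by (simp add: divide_inverse power2_eq_square power_inverse)
    from DERIV_mult[OF has_real_derivative_pd2[OF smooth_on2D(2)[OF a] p] DERIV_power[OF this, of k]]
    show ?thesis
      by (rule DERIV_cong) (use f(2)[OF p] in \<open>cases k; simp add: field_simps power2_eq_square\<close>)
  qed
  then have "((\<lambda>s. a (line2 d p s) * (1 / f (line2 d p s)) ^ k +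
        (\<Sum>(a, k)\<leftarrow>L. a (line2 d p s) * (1 / f (line2 d p s)) ^ k))
      has_real_derivative (pd2 d a p * (1 / f p) ^ k + (- real k * a p * pd2 d f p) * (1 / f p) ^ Suc k) +
        (\<Sum>(a, k)\<leftarrow>concat (map (\<lambda>(a, k). [(pd2 d a, k), (\<lambda>x. - real k * a x * pd2 d f x, Suc k)]) L).
            a p * (1 / f p) ^ k))
      (at (coord2 d p))" if "p \<in> S" for d p
    using Cons that by (intro DERIV_add) auto
  moreover have "continuous_on S (\<lambda>x. a x * (1 / f x) ^ k + (\<Sum>(a, k)\<leftarrow>L. a x * (1 / f x) ^ k))"
    using Cons smooth_on2D(1)[OF a] smooth_on2D(1)[OF f(1)] f(2) by (auto intro!: continuous_intros)
  ultimately show ?case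
    by (simp only: ak list.map concat.simps append.simps sum_list.Cons prod.case add.assoc) blast
qed auto

lemma smooth_on2_inverse:
  fixes f :: "real \<times> real \<Rightarrow> real"
  assumes S: "open S" and f: "smooth_on2 S f" "\<And>x. x \<in> S \<Longrightarrow> f x \<noteq> 0"
  shows "smooth_on2 S (\<lambda>x. 1 / f x)"
proof (rule smooth_on2_coinduct[OF S, where P="\<lambda>h. \<exists>L. (\<forall>(a, k)\<in>set L. smooth_on2 S a) \<and>
     h = (\<lambda>x. \<Sum>(a, k)\<leftarrow>L. a x * (1 / f x) ^ k)"])
  show "\<exists>L. (\<forall>(a, k)\<in>set L. smooth_on2 S a) \<and> (\<lambda>x. 1 / f x) = (\<lambda>x. \<Sum>(a, k)\<leftarrow>L. a x * (1 / f x) ^ k)"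
    by (rule exI[of _ "[(\<lambda>_. 1, 1)]"]) (auto simp: S smooth_on2_const)
  fix h assume "\<exists>L. (\<forall>(a, k)\<in>set L. smooth_on2 S a) \<and> h = (\<lambda>x. \<Sum>(a, k)\<leftarrow>L. a x * (1 / f x) ^ k)"
  then obtain L where L: "\<forall>(a, k)\<in>set L. smooth_on2 S a"
    and h: "h = (\<lambda>x. \<Sum>(a, k)\<leftarrow>L. a x * (1 / f x) ^ k)"
    by blast
  note partials = sum_list_power_inverse_partials[OF f L]
  have "partially_differentiable_on S h"
    unfolding partially_differentiable_on_def h using partials
    by (auto simp: has_real_derivative_iff_has_vector_derivative intro: differentiableI_vector)
  moreover have "\<exists>L'. (\<forall>(a, k)\<in>set L'. smooth_on2 S a) \<and>
      (\<forall>p\<in>S. pd2 d h p = (\<Sum>(a, k)\<leftarrow>L'. a p * (1 / f p) ^ k))" for d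
  proof (intro exI conjI)
    let ?L = "concat (map (\<lambda>(a, k). [(pd2 d a, k), (\<lambda>x. - real k * a x * pd2 d f x, Suc k)]) L)"
    show "\<forall>(a, k)\<in>set ?L. smooth_on2 S a"
      using L by (auto simp: smooth_on2D(3) S f intro!: smooth_on2_mult smooth_on2_const smooth_on2_uminus)
    show "\<forall>p\<in>S. pd2 d h p = (\<Sum>(a, k)\<leftarrow>?L. a p * (1 / f p) ^ k)"
      using partials h by (auto intro!: pd2_eqI simp: has_real_derivative_iff_has_vector_derivative)
  qed
  ultimately show "continuous_on S h \<and> partially_differentiable_on S h \<and>
      (\<forall>d. \<exists>h'. (\<exists>L. (\<forall>(a, k)\<in>set L. smooth_on2 S a) \<and>
         h' = (\<lambda>x. \<Sum>(a, k)\<leftarrow>L. a x * (1 / f x) ^ k)) \<and> (\<forall>p\<in>S. pd2 d h p = h' p))"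
    using partials h by fastforce
qed

lemma dist_Pair_le:
  fixes a c :: "'a::real_normed_vector" and b d :: "'b::real_normed_vector"
  shows "dist (a, b) (c, d) \<le> dist a c + dist b d"
  using norm_Pair_le[of "a - c" "b - d"] by (simp add: dist_norm)

lemma square_in_open:
  fixes S :: "(real \<times> real) set"
  assumes "open S" "(x, y) \<in> S"
  obtains r where "r > 0" "\<And>s t. \<bar>s - x\<bar> < r \<Longrightarrow> \<bar>t - y\<bar> < r \<Longrightarrow> (s, t) \<in> S"
proof -
  obtain e where e: "e > 0" "ball (x, y) e \<subseteq> S"
    using assms openE by blast
  have "(s, t) \<in> S" if "\<bar>s - x\<bar> < e / 2" "\<bar>t - y\<bar> < e / 2" for s t
  proof -
    have "dist (x, y) (s, t) < e"
      using dist_Pair_le[of x y s t] that by (simp add: dist_real_def abs_minus_commute)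
    then show ?thesis using e by auto
  qed
  then show ?thesis using that e by (meson half_gt_zero)
qed

lemma smooth_on2_has_derivative:
  fixes g :: "real \<times> real \<Rightarrow> 'b::real_normed_vector"
  assumes S: "open S" and g: "smooth_on2 S g" and p: "p \<in> S"
  shows "(g has_derivative (\<lambda>(a, b). a *\<^sub>R pd2 False g p + b *\<^sub>R pd2 True g p)) (at p)"
proof -
  obtain x0 y0 where p0: "p = (x0, y0)" by fastforce
  obtain r where r: "r > 0" "\<And>s t. \<bar>s - x0\<bar> < r \<Longrightarrow> \<bar>t - y0\<bar> < r \<Longrightarrow> (s, t) \<in> S"
    using square_in_open[OF S p[unfolded p0]] by blast
  define X where "X = ball x0 r"
  define Y where "Y = ball y0 r"
  have XY: "X \<times> Y \<subseteq> S"
    using r(2) by (auto simp: X_def Y_def dist_real_def abs_minus_commute)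
  have ld: "partially_differentiable_on S g"
    using smooth_on2D(2)[OF g] .
  have fx: "((\<lambda>x. g (x, y0)) has_derivative (\<lambda>a. a *\<^sub>R pd2 False g p)) (at x0 within X)"
    using has_vector_derivative_pd2[OF ld p, of False] p0
    by (auto simp: has_vector_derivative_def intro: has_derivative_at_withinI)
  have fy: "((\<lambda>y. g (x, y)) has_derivative blinfun_apply (blinfun_scaleR_left (pd2 True g (x, y))))
      (at y within Y)" if "x \<in> X" "y \<in> Y" for x y
    using has_vector_derivative_pd2[OF ld, of "(x, y)" True] XY that
    by (auto simp: has_vector_derivative_def intro: has_derivative_at_withinI)
  have "continuous (at (x0, y0) within X \<times> Y) (pd2 True g)"
    using smooth_on2D(1)[OF smooth_on2D(3)[OF g]] S p p0
    by (metis continuous_on_eq_continuous_at continuous_at_imp_continuous_within)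
  then have "continuous (at (x0, y0) within X \<times> Y) (\<lambda>(x, y). blinfun_scaleR_left (pd2 True g (x, y)))"
    using bounded_linear.continuous[OF bounded_linear_blinfun_scaleR_left] by (simp add: case_prod_unfold)
  from has_derivative_partialsI[OF fx fy this]
  have "((\<lambda>(x, y). g (x, y)) has_derivative
      (\<lambda>(a, b). a *\<^sub>R pd2 False g p + b *\<^sub>R pd2 True g (x0, y0))) (at (x0, y0) within X \<times> Y)"
    using r(1) by (simp add: Y_def)
  moreover have "at (x0, y0) within X \<times> Y = at (x0, y0)"
    using r(1) by (intro at_within_open) (auto simp: X_def Y_def open_Times)
  ultimately show ?thesis
    using p0 by simp
qed

lemma has_vector_derivative_compose_plane:
  fixes K :: "real \<times> real \<Rightarrow> 'b::real_normed_vector"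
  assumes "(K has_derivative (\<lambda>(a, b). a *\<^sub>R A + b *\<^sub>R B)) (at (c s0))"
    and "(c has_vector_derivative (u, v)) (at s0)"
  shows "((\<lambda>s. K (c s)) has_vector_derivative (u *\<^sub>R A + v *\<^sub>R B)) (at s0)"
  using diff_chain_at[OF assms(2)[unfolded has_vector_derivative_def] assms(1)]
  by (simp add: has_vector_derivative_def comp_def scaleR_add_right case_prod_unfold)

text \<open>The partial derivatives of \<open>K (\<phi> x, snd x)\<close> are again of this form, with \<open>K\<close> replaced
  by a smooth combination of \<open>H\<close> and the partial derivatives of \<open>K\<close>.\<close>

lemma smooth_on2_compose_space_change:
  fixes \<phi> :: "real \<times> real \<Rightarrow> real" and K :: "real \<times> real \<Rightarrow> 'b::real_normed_vector"
  assumes S: "open S" and cont: "continuous_on S \<phi>"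
    and inS: "\<And>x. x \<in> S \<Longrightarrow> (\<phi> x, snd x) \<in> S"
    and der: "\<And>d x. x \<in> S \<Longrightarrow>
      ((\<lambda>s. \<phi> (line2 d x s)) has_real_derivative H d (\<phi> x, snd x)) (at (coord2 d x))"
    and H: "\<And>d. smooth_on2 S (H d)"
    and K: "smooth_on2 S K"
  shows "smooth_on2 S (\<lambda>x. K (\<phi> x, snd x))"
proof (rule smooth_on2_coinduct[OF S, where P="\<lambda>h. \<exists>K. smooth_on2 S K \<and> h = (\<lambda>x. K (\<phi> x, snd x))"])
  fix h :: "real \<times> real \<Rightarrow> 'b" assume "\<exists>K. smooth_on2 S K \<and> h = (\<lambda>x. K (\<phi> x, snd x))"
  then obtain K where K: "smooth_on2 S K" and h: "h = (\<lambda>x. K (\<phi> x, snd x))"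
    by blast
  define K' where "K' d q = H d q *\<^sub>R pd2 False K q + (if d then 1 else 0) *\<^sub>R pd2 True K q" for d q
  have "continuous_on S (\<lambda>x. (\<phi> x, snd x))"
    by (intro continuous_intros cont)
  then have "continuous_on S h"
    unfolding h using continuous_on_compose2[OF smooth_on2D(1)[OF K]] inS by blast
  moreover have "smooth_on2 S (K' d)" for d
    unfolding K'_def by (intro smooth_on2_add smooth_on2_scaleR S H smooth_on2_const smooth_on2D(3)[OF K])
  moreover have dh: "((\<lambda>s. h (line2 d x s)) has_vector_derivative K' d (\<phi> x, snd x)) (at (coord2 d x))"
    if x: "x \<in> S" for d x
  proof -
    have "((\<lambda>s. (\<phi> (line2 d x s), snd (line2 d x s))) has_vector_derivative
        (H d (\<phi> x, snd x), if d then 1 else 0)) (at (coord2 d x))"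
      using der[OF x, of d]
      by (cases x; cases d)
        (auto intro!: has_vector_derivative_Pair derivative_eq_intros
          simp: has_real_derivative_iff_has_vector_derivative)
    moreover have "(K has_derivative (\<lambda>(a, b). a *\<^sub>R pd2 False K (\<phi> x, snd x) + b *\<^sub>R pd2 True K (\<phi> x, snd x)))
        (at ((\<lambda>s. (\<phi> (line2 d x s), snd (line2 d x s))) (coord2 d x)))"
      using smooth_on2_has_derivative[OF S K inS[OF x]] by simp
    ultimately show ?thesis
      unfolding h K'_def using has_vector_derivative_compose_plane by fastforce
  qed
  moreover have "partially_differentiable_on S h"
    unfolding partially_differentiable_on_def using dh differentiableI_vector by blast
  ultimately show "continuous_on S h \<and> partially_differentiable_on S h \<and>
      (\<forall>d. \<exists>h'. (\<exists>K. smooth_on2 S K \<and> h' = (\<lambda>x. K (\<phi> x, snd x))) \<and> (\<forall>p\<in>S. pd2 d h p = h' p))"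
    using pd2_eqI by blast
qed (use K in blast)

lemma second_difference_mean_value:
  fixes f fx fxy :: "real \<times> real \<Rightarrow> real"
  assumes h: "0 < h"
    and fx: "\<And>s t. x \<le> s \<Longrightarrow> s \<le> x + h \<Longrightarrow> y \<le> t \<Longrightarrow> t \<le> y + h \<Longrightarrow>
      ((\<lambda>s. f (s, t)) has_real_derivative fx (s, t)) (at s)"
    and fxy: "\<And>s t. x \<le> s \<Longrightarrow> s \<le> x + h \<Longrightarrow> y \<le> t \<Longrightarrow> t \<le> y + h \<Longrightarrow>
      ((\<lambda>t. fx (s, t)) has_real_derivative fxy (s, t)) (at t)"
  obtains z w where "x \<le> z" "z \<le> x + h" "y \<le> w" "w \<le> y + h"
    "f (x + h, y + h) - f (x + h, y) - f (x, y + h) + f (x, y) = h * h * fxy (z, w)"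
proof -
  have "((\<lambda>s. f (s, y + h) - f (s, y)) has_real_derivative fx (s, y + h) - fx (s, y)) (at s)"
    if "x \<le> s" "s \<le> x + h" for s
    using that h by (intro DERIV_diff fx) auto
  then obtain z where z: "x < z" "z < x + h"
    "(f (x + h, y + h) - f (x + h, y)) - (f (x, y + h) - f (x, y)) = h * (fx (z, y + h) - fx (z, y))"
    using MVT2[of x "x + h"] h by force
  have "((\<lambda>t. fx (z, t)) has_real_derivative fxy (z, t)) (at t)" if "y \<le> t" "t \<le> y + h" for t
    using that z by (intro fxy) auto
  then obtain w where w: "y < w" "w < y + h" "fx (z, y + h) - fx (z, y) = h * fxy (z, w)"
    using MVT2[of y "y + h"] h by force
  show ?thesis
    using that[of z w] z w by (simp add: algebra_simps)
qed

lemma continuous_at_eq_if_arbitrarily_close: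
  fixes f g :: "'a::metric_space \<Rightarrow> real"
  assumes "continuous (at p) f" "continuous (at p) g"
    and close: "\<And>e. e > 0 \<Longrightarrow> \<exists>q q'. dist q p < e \<and> dist q' p < e \<and> f q = g q'"
  shows "f p = g p"
proof (rule ccontr)
  assume "f p \<noteq> g p"
  then have e: "\<bar>f p - g p\<bar> / 2 > 0" by simp
  obtain d1 where "d1 > 0" "\<And>q. dist q p < d1 \<Longrightarrow> dist (f q) (f p) < \<bar>f p - g p\<bar> / 2"
    using assms(1) e unfolding continuous_at_eps_delta by metis
  moreover obtain d2 where "d2 > 0" "\<And>q. dist q p < d2 \<Longrightarrow> dist (g q) (g p) < \<bar>f p - g p\<bar> / 2"
    using assms(2) e unfolding continuous_at_eps_delta by metis
  moreover obtain q q' where "dist q p < min d1 d2" "dist q' p < min d1 d2" "f q = g q'"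
    using close[of "min d1 d2"] calculation by auto
  ultimately have "dist (f q) (f p) + dist (g q') (g p) < \<bar>f p - g p\<bar> / 2 + \<bar>f p - g p\<bar> / 2"
    by (metis add_strict_mono min.strict_boundedE)
  moreover have "\<bar>f p - g p\<bar> \<le> dist (f q) (f p) + dist (g q') (g p)"
    using abs_triangle_ineq[of "f p - f q" "g q' - g p"] \<open>f q = g q'\<close>
    by (simp add: dist_real_def abs_minus_commute)
  ultimately show False
    by simp
qed

text \<open>Both mixed partial derivatives are values of the second difference quotient of \<open>f\<close> over
  a small square at \<open>p\<close>.\<close>

lemma mixed_partials_at_close_points:
  fixes f :: "real \<times> real \<Rightarrow> real"
  assumes S: "open S" and f: "smooth_on2 S f" and p: "p \<in> S" and "e > 0"
  shows "\<exists>q q'. dist q p < e \<and> dist q' p < e \<and> pd2 True (pd2 False f) q = pd2 False (pd2 True f) q'"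
proof -
  obtain x y where p0: "p = (x, y)" by fastforce
  obtain r where r: "r > 0" "\<And>s t. \<bar>s - x\<bar> < r \<Longrightarrow> \<bar>t - y\<bar> < r \<Longrightarrow> (s, t) \<in> S"
    using square_in_open[OF S p[unfolded p0]] by blast
  let ?fx = "pd2 False f" and ?fy = "pd2 True f"
  have pd: "partially_differentiable_on S f" "partially_differentiable_on S ?fx"
      "partially_differentiable_on S ?fy"
    using smooth_on2D(2)[OF f] smooth_on2D(2)[OF smooth_on2D(3)[OF f]] by auto
  define h where "h = min r e / 3"
  have h: "0 < h" "h < r" "2 * h < e"
    using r(1) \<open>e > 0\<close> by (auto simp: h_def)
  have box: "(s, t) \<in> S" if "x \<le> s" "s \<le> x + h" "y \<le> t" "t \<le> y + h" for s t
    using r(2)[of s t] that h by auto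
  have near: "dist (s, t) p < e" if "x \<le> s" "s \<le> x + h" "y \<le> t" "t \<le> y + h" for s t
    using dist_Pair_le[of s t x y] that h p0 by (simp add: dist_real_def)
  have fx: "((\<lambda>s. f (s, t)) has_real_derivative ?fx (s, t)) (at s)"
    and fxy: "((\<lambda>t. ?fx (s, t)) has_real_derivative pd2 True ?fx (s, t)) (at t)"
    and fy: "((\<lambda>t. f (s, t)) has_real_derivative ?fy (s, t)) (at t)"
    and fyx: "((\<lambda>s. ?fy (s, t)) has_real_derivative pd2 False ?fy (s, t)) (at s)"
    if "x \<le> s" "s \<le> x + h" "y \<le> t" "t \<le> y + h" for s t
    using has_real_derivative_pd2[OF pd(1) box[OF that], of False]
      has_real_derivative_pd2[OF pd(2) box[OF that], of True]
      has_real_derivative_pd2[OF pd(1) box[OF that], of True]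
      has_real_derivative_pd2[OF pd(3) box[OF that], of False]
    by simp_all
  obtain z w where zw: "x \<le> z" "z \<le> x + h" "y \<le> w" "w \<le> y + h"
    "f (x + h, y + h) - f (x + h, y) - f (x, y + h) + f (x, y) = h * h * pd2 True ?fx (z, w)"
    using second_difference_mean_value[OF h(1), of x y f ?fx "pd2 True ?fx"] fx fxy by blast
  obtain w' z' where zw': "y \<le> w'" "w' \<le> y + h" "x \<le> z'" "z' \<le> x + h"
    "f (x + h, y + h) - f (x, y + h) - f (x + h, y) + f (x, y) = h * h * pd2 False ?fy (z', w')"
    using second_difference_mean_value[OF h(1), of y x "\<lambda>(t, s). f (s, t)" "\<lambda>(t, s). ?fy (s, t)"
        "\<lambda>(t, s). pd2 False ?fy (s, t)"] fy fyx by auto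
  show ?thesis
  proof (intro exI conjI)
    show "dist (z, w) p < e" "dist (z', w') p < e"
      using zw zw' near by auto
    show "pd2 True ?fx (z, w) = pd2 False ?fy (z', w')"
      using zw(5) zw'(5) h(1) by (simp add: algebra_simps)
  qed
qed

lemma pd2_commute_real:
  fixes f :: "real \<times> real \<Rightarrow> real"
  assumes S: "open S" and f: "smooth_on2 S f" and p: "p \<in> S"
  shows "pd2 True (pd2 False f) p = pd2 False (pd2 True f) p"
proof (rule continuous_at_eq_if_arbitrarily_close[of p "pd2 True (pd2 False f)" "pd2 False (pd2 True f)"])
  show "continuous (at p) (pd2 True (pd2 False f))" "continuous (at p) (pd2 False (pd2 True f))"
    using smooth_on2D(1)[OF smooth_on2D(3)[OF smooth_on2D(3)[OF f]]] S p
    by (auto simp: continuous_on_eq_continuous_at)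
qed (rule mixed_partials_at_close_points[OF assms])

lemma pd2_inner_right:
  fixes g :: "real \<times> real \<Rightarrow> 'b::real_inner"
  assumes "partially_differentiable_on S g" "p \<in> S"
  shows "pd2 d (\<lambda>x. g x \<bullet> c) p = pd2 d g p \<bullet> c"
  using bounded_linear.has_vector_derivative[OF bounded_linear_inner_left has_vector_derivative_pd2[OF assms]]
  by (rule pd2_eqI)

lemma pd2_inner:
  fixes f g :: "real \<times> real \<Rightarrow> 'b::real_inner"
  assumes "partially_differentiable_on S f" "partially_differentiable_on S g" "p \<in> S"
  shows "pd2 d (\<lambda>x. f x \<bullet> g x) p = f p \<bullet> pd2 d g p + pd2 d f p \<bullet> g p"
  using bounded_bilinear.has_vector_derivative[OF bounded_bilinear_inner
      has_vector_derivative_pd2[OF assms(1,3)] has_vector_derivative_pd2[OF assms(2,3)]]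
  by (intro pd2_eqI) simp

text \<open>Schwarz's theorem, reduced to the real-valued case by taking inner products with a
  fixed vector.\<close>

lemma pd2_commute:
  fixes g :: "real \<times> real \<Rightarrow> 'b::real_inner"
  assumes S: "open S" and g: "smooth_on2 S g" and p: "p \<in> S"
  shows "pd2 True (pd2 False g) p = pd2 False (pd2 True g) p"
proof -
  have "pd2 d' (pd2 d (\<lambda>x. g x \<bullet> c)) p = pd2 d' (pd2 d g) p \<bullet> c" for d d' c
  proof -
    have "pd2 d' (pd2 d (\<lambda>x. g x \<bullet> c)) p = pd2 d' (\<lambda>q. pd2 d g q \<bullet> c) p"
      using pd2_inner_right[OF smooth_on2D(2)[OF g]] by (intro pd2_cong_open[OF S p])
    also have "\<dots> = pd2 d' (pd2 d g) p \<bullet> c"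
      by (rule pd2_inner_right[OF smooth_on2D(2)[OF smooth_on2D(3)[OF g]] p])
    finally show ?thesis .
  qed
  then have "pd2 True (pd2 False g) p \<bullet> c = pd2 False (pd2 True g) p \<bullet> c" for c
    using pd2_commute_real[OF S smooth_on2_inner[OF S g smooth_on2_const[OF S]] p] by metis
  then show ?thesis
    by (metis inner_diff_left inner_eq_zero_iff right_minus_eq)
qed

section \<open>Angles, periodic functions and Hoelder continuity\<close>

lemma frame_decomposition:
  fixes z w :: complex
  assumes "norm w = 1"
  shows "z = (z \<bullet> w) *\<^sub>R w + (z \<bullet> Jrot w) *\<^sub>R Jrot w"
proof -
  have "Re w * Re w + Im w * Im w = 1"
    using assms by (simp add: norm_complex_def power2_eq_square)
  then show ?thesis
    by (simp add: complex_eq_iff inner_complex_def Jrot_def) algebra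
qed

text \<open>Locally the angle is a branch of the logarithm of the curve rotated back to \<open>1\<close>.\<close>

lemma has_real_derivative_continuous_angle:
  fixes f :: "real \<Rightarrow> complex" and \<theta> :: "real \<Rightarrow> real"
  assumes U: "open U" "s0 \<in> U" and f_eq: "\<And>s. s \<in> U \<Longrightarrow> f s = cis (\<theta> s)"
    and \<theta>: "continuous (at s0) \<theta>" and f: "(f has_vector_derivative f') (at s0)"
  shows "(\<theta> has_real_derivative f' \<bullet> Jrot (f s0)) (at s0)"
proof -
  obtain e1 where e1: "e1 > 0" "ball s0 e1 \<subseteq> U"
    using U openE by blast
  obtain e2 where e2: "e2 > 0" "\<And>s. dist s s0 < e2 \<Longrightarrow> dist (\<theta> s) (\<theta> s0) < pi / 2"
    using \<theta> unfolding continuous_at_eps_delta by (metis pi_half_gt_zero)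
  define c where "c = cnj (f s0)"
  have fc: "f s * c = cis (\<theta> s - \<theta> s0)" if "s \<in> U" for s
    using f_eq[OF that] f_eq[OF U(2)] by (simp add: c_def cis_cnj cis_mult)
  have \<theta>_eq: "\<theta> s0 + Im (Ln (f s * c)) = \<theta> s" if "s \<in> ball s0 (min e1 e2)" for s
  proof -
    have "\<bar>\<theta> s - \<theta> s0\<bar> < pi / 2"
      using e2(2)[of s] that by (auto simp: dist_real_def dist_commute)
    then have "- (pi / 2) < \<theta> s - \<theta> s0" "\<theta> s - \<theta> s0 < pi / 2"
      by (simp_all only: abs_less_iff) linarith+
    then have "\<theta> s - \<theta> s0 \<in> {-pi<..pi}"
      using pi_gt_zero by simp
    then show ?thesis
      using fc[of s] that e1 by (auto simp: Ln_cis)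
  qed
  have "f s0 * c = 1"
    using fc[OF U(2)] by simp
  moreover have "((\<lambda>s. f s * c) has_vector_derivative f' * c) (at s0)"
    using f by (auto intro!: derivative_eq_intros)
  ultimately have "((Ln \<circ> (\<lambda>s. f s * c)) has_vector_derivative f' * c * inverse 1) (at s0)"
    using has_field_derivative_Ln[of 1] by (intro field_vector_diff_chain_at) simp_all
  then have "((\<lambda>s. Ln (f s * c)) has_vector_derivative f' * c) (at s0)"
    by (simp add: comp_def)
  then have "((\<lambda>s. \<theta> s0 + Im (Ln (f s * c))) has_real_derivative Im (f' * c)) (at s0)"
    using bounded_linear.has_vector_derivative[OF bounded_linear_Im]
    by (auto simp: has_real_derivative_iff_has_vector_derivative intro!: derivative_eq_intros)
  then have "(\<theta> has_real_derivative Im (f' * c)) (at s0)"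
    by (rule has_field_derivative_transform_within_open[where S="ball s0 (min e1 e2)"])
      (use e1 e2 \<theta>_eq in auto)
  then show ?thesis
    by (simp add: c_def inner_complex_def Jrot_def algebra_simps)
qed

lemma continuous_on_Ints_imp_constant:
  fixes f :: "'a::topological_space \<Rightarrow> real"
  assumes "connected S" "continuous_on S f" "\<And>x. x \<in> S \<Longrightarrow> f x \<in> \<int>" "x \<in> S" "y \<in> S"
  shows "f x = f y"
proof -
  have "f constant_on S"
  proof (rule continuous_discrete_range_constant[OF assms(1,2)])
    fix x assume "x \<in> S"
    show "\<exists>e>0. \<forall>y. y \<in> S \<and> f y \<noteq> f x \<longrightarrow> e \<le> norm (f y - f x)"
    proof (intro exI[of _ 1] conjI allI impI)
      fix y assume y: "y \<in> S \<and> f y \<noteq> f x"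
      obtain a b where "f x = of_int a" "f y = of_int b"
        using assms(3) \<open>x \<in> S\<close> y by (meson Ints_cases)
      moreover have "a \<noteq> b"
        using y calculation by auto
      ultimately show "1 \<le> norm (f y - f x)"
        by (simp flip: of_int_diff)
    qed simp
  qed
  then show ?thesis
    using assms(4,5) by (auto simp: constant_on_def)
qed

lemma periodic_image_eq:
  fixes f :: "real \<Rightarrow> 'a"
  assumes "p > 0" "\<And>x. f (x + p) = f x"
  shows "f ` UNIV = f ` {0..p}"
proof -
  interpret periodic_fun_simple f p
    by unfold_locales (rule assms(2))
  have "f x \<in> f ` {0..p}" for x
  proof -
    define k where "k = \<lfloor>x / p\<rfloor>"
    have "k \<le> x / p" "x / p < k + 1"
      unfolding k_def by linarith+
    then have "x - k * p \<in> {0..p}"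
      using assms(1) by (auto simp: field_simps)
    moreover have "f x = f (x - k * p)"
      using minus_of_int[of x k] by simp
    ultimately show ?thesis
      by blast
  qed
  then show ?thesis
    by auto
qed

lemma periodic_continuous_bounded:
  fixes f :: "real \<Rightarrow> 'a::real_normed_vector"
  assumes "p > 0" "\<And>x. f (x + p) = f x" "continuous_on UNIV f"
  obtains M where "\<And>x. norm (f x) \<le> M"
proof -
  have "compact (f ` {0..p})"
    using compact_continuous_image[OF continuous_on_subset[OF assms(3)] compact_Icc] by blast
  then obtain M where "\<forall>y\<in>f ` {0..p}. norm y \<le> M"
    using compact_imp_bounded bounded_iff by metis
  then show ?thesis
    using that periodic_image_eq[of p f, OF assms(1,2)] by (metis rangeI)
qed

lemma periodic_continuous_pos_lower_bound:
  fixes f :: "real \<Rightarrow> real"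
  assumes "p > 0" "\<And>x. f (x + p) = f x" "continuous_on UNIV f" "\<And>x. f x > 0"
  obtains m where "m > 0" "\<And>x. m \<le> f x"
proof -
  have "\<exists>x\<in>{0..p}. \<forall>y\<in>{0..p}. f x \<le> f y"
    using continuous_attains_inf[of "{0..p}" f] continuous_on_subset[OF assms(3)] assms(1) by simp
  then obtain x0 where x0: "\<And>y. y \<in> {0..p} \<Longrightarrow> f x0 \<le> f y"
    by blast
  have "f x0 \<le> f x" for x
  proof -
    obtain y where "y \<in> {0..p}" "f x = f y"
      using periodic_image_eq[of p f, OF assms(1,2)] by (metis imageE rangeI)
    then show ?thesis
      using x0 by simp
  qed
  then show ?thesis
    using that assms(4) by blast
qed

lemma surj_if_close_to_linear:
  fixes f :: "real \<Rightarrow> real"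
  assumes "continuous_on UNIV f" "c > 0" "\<And>x. \<bar>f x - c * x\<bar> \<le> B"
  shows "\<exists>x. f x = w"
proof -
  have "f ((w - B) / c) \<le> w" "w \<le> f ((w + B) / c)"
    using assms(3)[of "(w - B) / c"] assms(3)[of "(w + B) / c"] assms(2) by auto
  moreover have "(w - B) / c \<le> (w + B) / c"
    using assms(2) assms(3)[of 0] by (simp add: divide_right_mono)
  ultimately show ?thesis
    using IVT'[of f "(w - B) / c" w "(w + B) / c"] continuous_on_subset[OF assms(1)] by blast
qed

lemma vector_derivative_periodic:
  fixes f :: "real \<Rightarrow> 'a::real_normed_vector"
  assumes "\<And>x. f (x + p) = f x" "\<And>x. f differentiable (at x)"
  shows "vector_derivative f (at (x + p)) = vector_derivative f (at x)"
proof -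
  have "((f \<circ> (\<lambda>s. s + p)) has_vector_derivative 1 *\<^sub>R vector_derivative f (at (x + p))) (at x)"
    using assms(2) vector_derivative_works
    by (intro vector_diff_chain_at) (auto intro!: derivative_eq_intros)
  moreover have "f \<circ> (\<lambda>s. s + p) = f"
    using assms(1) by (simp add: fun_eq_iff)
  ultimately show ?thesis
    by (simp add: vector_derivative_at)
qed

lemma lipschitz_if_bounded_vector_derivative:
  fixes f :: "real \<Rightarrow> 'a::real_normed_vector"
  assumes "\<And>x. (f has_vector_derivative f' x) (at x)" "\<And>x. norm (f' x) \<le> M"
  shows "norm (f x - f y) \<le> M * \<bar>x - y\<bar>"
proof -
  have "norm (f x - f y) \<le> M * norm (x - y)"
  proof (rule differentiable_bound[where S=UNIV and f'="\<lambda>x h. h *\<^sub>R f' x"])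
    fix z :: real
    show "(f has_derivative (\<lambda>h. h *\<^sub>R f' z)) (at z within UNIV)"
      using assms(1)[of z] by (simp add: has_vector_derivative_def)
    have "onorm (\<lambda>h::real. h *\<^sub>R f' z) = norm (f' z)"
      using onorm_scaleR_left[OF bounded_linear_ident, of "f' z"] by (simp add: onorm_id)
    then show "onorm (\<lambda>h::real. h *\<^sub>R f' z) \<le> M"
      using assms(2)[of z] by simp
  qed auto
  then show ?thesis
    by simp
qed

lemma continuous_angle_exists:
  fixes f :: "'a::real_normed_vector \<Rightarrow> complex"
  assumes "convex S" "continuous_on S f" "\<And>p. p \<in> S \<Longrightarrow> norm (f p) = 1"
  obtains \<theta> where "continuous_on S \<theta>" "\<And>p. p \<in> S \<Longrightarrow> f p = cis (\<theta> p)"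
proof -
  have "f p \<noteq> 0" if "p \<in> S" for p
    using assms(3)[OF that] by auto
  then obtain g where g: "continuous_on S g" "\<And>p. p \<in> S \<Longrightarrow> f p = exp (g p)"
    using continuous_logarithm_on_simply_connected[OF assms(2) convex_imp_simply_connected[OF assms(1)]
        convex_imp_locally_path_connected[OF assms(1)]]
    by metis
  have "f p = cis (Im (g p))" if p: "p \<in> S" for p
  proof -
    have "exp (Re (g p)) = 1"
      using assms(3)[OF p] unfolding g(2)[OF p] by (simp add: norm_exp_eq_Re)
    then have "g p = \<i> * complex_of_real (Im (g p))"
      by (simp add: complex_eq_iff)
    then show ?thesis
      using g(2)[OF p] by (metis cis_conv_exp)
  qed
  moreover have "continuous_on S (\<lambda>p. Im (g p))"
    using g(1) by (intro continuous_intros)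
  ultimately show ?thesis
    using that by blast
qed

lemma eventually_between_in_fst:
  fixes f :: "real \<times> real \<Rightarrow> real"
  assumes f: "continuous_on (UNIV \<times> T) f" and "t0 \<in> T" "f (a, t0) < w0" "w0 < f (b, t0)"
  shows "\<forall>\<^sub>F p in at (w0, t0) within UNIV \<times> T. f (a, snd p) < fst p \<and> fst p < f (b, snd p)"
proof -
  have lim: "((\<lambda>p. f (v, snd p) - fst p) \<longlongrightarrow> f (v, t0) - w0) (at (w0, t0) within UNIV \<times> T)" for v
  proof (intro tendsto_diff)
    have "continuous_on (UNIV \<times> T) (\<lambda>p. f (v, snd p))"
      by (rule continuous_on_compose2[OF f]) (auto intro!: continuous_intros)
    then show "((\<lambda>p. f (v, snd p)) \<longlongrightarrow> f (v, t0)) (at (w0, t0) within UNIV \<times> T)"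
      using \<open>t0 \<in> T\<close> unfolding continuous_on_def by fastforce
    show "(fst \<longlongrightarrow> w0) (at (w0, t0) within UNIV \<times> T)"
      using tendsto_fst[OF tendsto_ident_at, of "(w0, t0)" "UNIV \<times> T"] by simp
  qed
  have "\<forall>\<^sub>F p in at (w0, t0) within UNIV \<times> T. f (a, snd p) - fst p < 0"
    using order_tendstoD(2)[OF lim[of a], of 0] assms(3) by simp
  moreover have "\<forall>\<^sub>F p in at (w0, t0) within UNIV \<times> T. 0 < f (b, snd p) - fst p"
    using order_tendstoD(1)[OF lim[of b], of 0] assms(4) by simp
  ultimately show ?thesis
    by (rule eventually_mono[OF eventually_conj]) auto
qed

lemma continuous_on_inverse_in_fst:
  fixes f g :: "real \<times> real \<Rightarrow> real"
  assumes f: "continuous_on (UNIV \<times> T) f"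
    and mono: "\<And>t v w. t \<in> T \<Longrightarrow> v < w \<Longrightarrow> f (v, t) < f (w, t)"
    and inv: "\<And>w t. t \<in> T \<Longrightarrow> f (g (w, t), t) = w"
  shows "continuous_on (UNIV \<times> T) g"
  unfolding continuous_on_def
proof (intro ballI tendstoI)
  fix p0 :: "real \<times> real" and e :: real
  assume p0: "p0 \<in> UNIV \<times> T" and e: "e > 0"
  obtain w0 t0 where wt0: "p0 = (w0, t0)" "t0 \<in> T"
    using p0 by auto
  define v0 where "v0 = g p0"
  have mono_iff: "f (v, t) < f (w, t) \<longleftrightarrow> v < w" if "t \<in> T" for t v w
    using mono[OF that, of v w] mono[OF that, of w v] by (cases v w rule: linorder_cases) auto
  have "f (v0, t0) = w0"
    using inv[OF wt0(2)] by (simp add: v0_def wt0(1))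
  then have "f (v0 - e / 2, t0) < w0" "w0 < f (v0 + e / 2, t0)"
    using mono[OF wt0(2)] e by force+
  from eventually_between_in_fst[OF f wt0(2) this]
  have "\<forall>\<^sub>F p in at p0 within UNIV \<times> T. f (v0 - e / 2, snd p) < fst p \<and> fst p < f (v0 + e / 2, snd p)"
    by (simp add: wt0(1))
  moreover have "\<forall>\<^sub>F p in at p0 within UNIV \<times> T. p \<in> UNIV \<times> T"
    by (simp add: eventually_at_filter)
  ultimately show "\<forall>\<^sub>F p in at p0 within UNIV \<times> T. dist (g p) (g p0) < e"
  proof eventually_elim
    case (elim p)
    obtain w t where p: "p = (w, t)" "t \<in> T"
      using elim(2) by auto
    then have "f (v0 - e / 2, t) < f (g p, t)" "f (g p, t) < f (v0 + e / 2, t)"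
      using elim(1) inv[OF p(2), of w] by auto
    then have "v0 - e / 2 < g p" "g p < v0 + e / 2"
      using mono_iff[OF p(2)] by blast+
    then show ?case
      using e by (simp add: dist_real_def abs_less_iff v0_def)
  qed
qed

text \<open>Implicit differentiation, by inverting the map \<open>(v, s) \<mapsto> (f (v, s), s)\<close>.\<close>

lemma has_derivative_inverse_in_fst:
  fixes f g :: "real \<times> real \<Rightarrow> real"
  assumes f: "(f has_derivative (\<lambda>(a, b). a * A + b * B)) (at (g q, snd q))" and "A \<noteq> 0"
    and g: "continuous (at q) g" and T: "open T" "q \<in> T"
    and inv: "\<And>p. p \<in> T \<Longrightarrow> f (g p, snd p) = fst p"
  shows "(g has_derivative (\<lambda>(a, b). (a - b * B) / A)) (at q)"
proof -
  define F' where "F' = (\<lambda>(a::real, b::real). (a * A + b * B, b))"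
  define G' where "G' = (\<lambda>(a::real, b::real). ((a - b * B) / A, b))"
  have "((\<lambda>(v, s). (f (v, s), s)) has_derivative F') (at ((\<lambda>p. (g p, snd p)) q))"
    using has_derivative_Pair[OF f has_derivative_snd[OF has_derivative_ident]]
    by (simp add: F'_def case_prod_unfold)
  moreover have "bounded_linear G'"
    unfolding G'_def using \<open>A \<noteq> 0\<close>
    by (intro linear_conv_bounded_linear[THEN iffD1])
      (auto simp: linear_iff field_simps add_divide_distrib[symmetric] diff_divide_distrib[symmetric])
  moreover have "G' \<circ> F' = id"
    using \<open>A \<noteq> 0\<close> by (auto simp: G'_def F'_def fun_eq_iff field_simps)
  moreover have "continuous (at q) (\<lambda>p. (g p, snd p))"
    using g by (intro continuous_intros)
  ultimately have "((\<lambda>p. (g p, snd p)) has_derivative G') (at q)"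
    using has_derivative_inverse_basic[OF _ _ _ _ T] inv by (force simp: case_prod_unfold)
  from has_derivative_fst[OF this]
  show ?thesis
    by (simp add: G'_def case_prod_unfold)
qed

lemma holder_nonneg_constE:
  assumes "holder a f"
  obtains C where "C \<ge> 0" "\<And>x y. norm (f x - f y) \<le> C * \<bar>x - y\<bar> powr a"
proof -
  obtain C where C: "\<And>x y. norm (f x - f y) \<le> C * \<bar>x - y\<bar> powr a"
    using assms unfolding holder_def by blast
  have "norm (f x - f y) \<le> max C 0 * \<bar>x - y\<bar> powr a" for x y
  proof -
    have "C * \<bar>x - y\<bar> powr a \<le> max C 0 * \<bar>x - y\<bar> powr a"
      by (rule mult_right_mono[OF max.cobounded1 powr_ge_zero])
    then show ?thesis
      using C[of x y] by linarith
  qed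
  then show ?thesis
    using that by (meson max.cobounded2)
qed

lemma holder_if_lipschitz_bounded:
  fixes f :: "real \<Rightarrow> 'a::real_normed_vector"
  assumes a: "0 < a" "a \<le> 1"
    and lip: "\<And>x y. norm (f x - f y) \<le> K * \<bar>x - y\<bar>"
    and bd: "\<And>x y. norm (f x - f y) \<le> D"
  shows "holder a f"
  unfolding holder_def
proof (intro exI allI)
  fix x y
  have K: "K \<ge> 0"
    using lip[of 1 0] norm_ge_zero order_trans by (metis abs_one diff_zero mult.right_neutral)
  have D: "D \<ge> 0"
    using bd[of 0 0] by simp
  show "norm (f x - f y) \<le> max K D * \<bar>x - y\<bar> powr a"
  proof (cases "\<bar>x - y\<bar> \<le> 1")
    case True
    have "\<bar>x - y\<bar> = \<bar>x - y\<bar> powr 1"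
      by (cases "x = y") auto
    also have "\<dots> \<le> \<bar>x - y\<bar> powr a"
      using True a by (intro powr_mono') auto
    finally have "\<bar>x - y\<bar> \<le> \<bar>x - y\<bar> powr a" .
    then have "K * \<bar>x - y\<bar> \<le> max K D * \<bar>x - y\<bar> powr a"
      using K by (intro mult_mono) auto
    then show ?thesis
      using lip[of x y] by linarith
  next
    case False
    then have "1 \<le> \<bar>x - y\<bar> powr a"
      using a by (intro ge_one_powr_ge_zero) auto
    then have "D \<le> max K D * \<bar>x - y\<bar> powr a"
      using D mult_left_mono[of 1 "\<bar>x - y\<bar> powr a" "max K D"] by linarith
    then show ?thesis
      using bd[of x y] by linarith
  qed
qed

lemma holder_inner:
  fixes f g :: "real \<Rightarrow> 'a::real_inner"
  assumes f: "holder a f" "\<And>x. norm (f x) \<le> M"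
    and g: "holder a g" "\<And>x. norm (g x) \<le> N"
  shows "holder a (\<lambda>x. f x \<bullet> g x)"
proof -
  obtain C where C: "C \<ge> 0" "\<And>x y. norm (f x - f y) \<le> C * \<bar>x - y\<bar> powr a"
    using holder_nonneg_constE[OF f(1)] by blast
  obtain C' where C': "C' \<ge> 0" "\<And>x y. norm (g x - g y) \<le> C' * \<bar>x - y\<bar> powr a"
    using holder_nonneg_constE[OF g(1)] by blast
  have M: "M \<ge> 0"
    using f(2)[of 0] norm_ge_zero order_trans by blast
  have "norm (f x \<bullet> g x - f y \<bullet> g y) \<le> (C * N + M * C') * \<bar>x - y\<bar> powr a" for x y
  proof -
    have "f x \<bullet> g x - f y \<bullet> g y = (f x - f y) \<bullet> g x + f y \<bullet> (g x - g y)"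
      by (simp add: inner_diff_left inner_diff_right)
    then have "\<bar>f x \<bullet> g x - f y \<bullet> g y\<bar> \<le> \<bar>(f x - f y) \<bullet> g x\<bar> + \<bar>f y \<bullet> (g x - g y)\<bar>"
      by (simp only: abs_triangle_ineq)
    also have "\<dots> \<le> norm (f x - f y) * norm (g x) + norm (f y) * norm (g x - g y)"
      by (intro add_mono Cauchy_Schwarz_ineq2)
    also have "\<dots> \<le> (C * \<bar>x - y\<bar> powr a) * N + M * (C' * \<bar>x - y\<bar> powr a)"
      using C C' f(2) g(2) M by (intro add_mono mult_mono) auto
    finally show ?thesis
      by (simp add: algebra_simps)
  qed
  then show ?thesis
    unfolding holder_def by blast
qed

lemma holder_divide:
  fixes f :: "real \<Rightarrow> real"
  assumes f: "holder a f" "\<And>x. m \<le> f x" and "m > 0" "c \<ge> 0"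
  shows "holder a (\<lambda>x. c / f x)"
proof -
  obtain C where C: "C \<ge> 0" "\<And>x y. norm (f x - f y) \<le> C * \<bar>x - y\<bar> powr a"
    using holder_nonneg_constE[OF f(1)] by blast
  have "\<bar>c / f x - c / f y\<bar> \<le> (c * C / (m * m)) * \<bar>x - y\<bar> powr a" for x y
  proof -
    have fxy: "m \<le> f x" "m \<le> f y"
      using f(2) by auto
    then have "c / f x - c / f y = c * (f y - f x) / (f x * f y)"
      using \<open>m > 0\<close> by (simp add: field_simps)
    then have "\<bar>c / f x - c / f y\<bar> = c * \<bar>f x - f y\<bar> / (f x * f y)"
      using fxy \<open>m > 0\<close> \<open>c \<ge> 0\<close> by (simp add: abs_mult abs_minus_commute)
    also have "\<dots> \<le> c * \<bar>f x - f y\<bar> / (m * m)"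
      using fxy \<open>m > 0\<close> \<open>c \<ge> 0\<close> by (intro divide_left_mono mult_mono) auto
    also have "\<dots> \<le> c * (C * \<bar>x - y\<bar> powr a) / (m * m)"
      using C(2)[of x y] \<open>c \<ge> 0\<close> by (intro divide_right_mono mult_left_mono) auto
    finally show ?thesis
      by simp
  qed
  then show ?thesis
    unfolding holder_def real_norm_def by blast
qed

lemma holder_compose_lipschitz:
  fixes g :: "real \<Rightarrow> 'a::real_normed_vector"
  assumes a: "0 < a" and g: "holder a g" and K: "K \<ge> 0"
    and lip: "\<And>x y. \<bar>\<phi> x - \<phi> y\<bar> \<le> K * \<bar>x - y\<bar>"
  shows "holder a (\<lambda>x. g (\<phi> x))"
proof -
  obtain C where C: "C \<ge> 0" "\<And>x y. norm (g x - g y) \<le> C * \<bar>x - y\<bar> powr a"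
    using holder_nonneg_constE[OF g] by blast
  have "norm (g (\<phi> x) - g (\<phi> y)) \<le> (C * K powr a) * \<bar>x - y\<bar> powr a" for x y
  proof -
    have "norm (g (\<phi> x) - g (\<phi> y)) \<le> C * \<bar>\<phi> x - \<phi> y\<bar> powr a"
      by (rule C(2))
    also have "\<dots> \<le> C * (K * \<bar>x - y\<bar>) powr a"
      using C(1) a lip[of x y] by (intro mult_left_mono powr_mono2) auto
    also have "\<dots> = (C * K powr a) * \<bar>x - y\<bar> powr a"
      using K by (simp add: powr_mult)
    finally show ?thesis .
  qed
  then show ?thesis
    unfolding holder_def by blast
qed

lemma holder_curvature_of_unit_curve:
  fixes \<gamma> :: "real \<Rightarrow> complex"
  assumes a: "0 < a" "a \<le> 1" and \<gamma>: "C1alpha a \<gamma>"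
    and periodic: "\<And>v. \<gamma> (v + 2 * pi) = \<gamma> v" and unit: "\<And>v. norm (\<gamma> v) = 1"
  shows "holder a (\<lambda>v. vector_derivative \<gamma> (at v) \<bullet> Jrot (\<gamma> v))"
proof -
  let ?d = "\<lambda>v. vector_derivative \<gamma> (at v)"
  have diff: "\<And>v. \<gamma> differentiable (at v)" and cont: "continuous_on UNIV ?d" and hd: "holder a ?d"
    using \<gamma> by (simp_all add: C1alpha_def)
  have "?d (v + 2 * pi) = ?d v" for v
    by (rule vector_derivative_periodic[OF periodic diff])
  then obtain M where M: "\<And>v. norm (?d v) \<le> M"
    using periodic_continuous_bounded[of "2 * pi" ?d] cont by auto
  have "(\<gamma> has_vector_derivative ?d v) (at v)" for v
    using diff vector_derivative_works by blast
  then have "norm (\<gamma> x - \<gamma> y) \<le> M * \<bar>x - y\<bar>" for x y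
    by (rule lipschitz_if_bounded_vector_derivative[OF _ M])
  moreover have "norm (\<gamma> x - \<gamma> y) \<le> 2" for x y
    using norm_triangle_ineq4[of "\<gamma> x" "\<gamma> y"] unit by simp
  ultimately have "holder a \<gamma>"
    by (rule holder_if_lipschitz_bounded[OF a])
  moreover have "norm (Jrot z - Jrot w) = norm (z - w)" for z w
    by (simp add: Jrot_def norm_mult flip: right_diff_distrib)
  ultimately have "holder a (\<lambda>v. Jrot (\<gamma> v))"
    unfolding holder_def by metis
  moreover have "norm (Jrot (\<gamma> v)) \<le> 1" for v
    using unit by (simp add: Jrot_def norm_mult)
  ultimately show ?thesis
    using holder_inner[OF hd M] by blast
qed

section \<open>Reparametrising an \<open>\<ell>\<close>-convex inverse curvature flow\<close>

locale convex_inverse_curvature_flow =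
  fixes X \<nu> :: "real \<Rightarrow> real \<Rightarrow> complex"
  assumes flow: "inverse_curvature_flow X \<nu>"
    and convex_initial: "\<forall>u. leg_ell \<nu> u 0 > 0"
begin

abbreviation half_plane :: "(real \<times> real) set" where
  "half_plane \<equiv> UNIV \<times> {0<..}"

abbreviation closed_half_plane :: "(real \<times> real) set" where
  "closed_half_plane \<equiv> UNIV \<times> {0..}"

lemma legendre: "legendre_flow X \<nu>"
  using flow by (simp add: inverse_curvature_flow_def)

lemma smooth_X: "smooth_on2 half_plane (case_prod X)"
  and smooth_nu: "smooth_on2 half_plane (case_prod \<nu>)"
  using flow by (simp_all add: inverse_curvature_flow_def smooth_flow_def)

lemma norm_nu: "t \<ge> 0 \<Longrightarrow> norm (\<nu> u t) = 1"
  and nu_periodic: "t \<ge> 0 \<Longrightarrow> \<nu> (u + 2 * pi) t = \<nu> u t"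
  and legendre_condition: "t \<ge> 0 \<Longrightarrow> du X u t \<bullet> \<nu> u t = 0"
  using legendre by (simp_all add: legendre_flow_def periodic_flow_def)

lemma ell_pos: "t \<ge> 0 \<Longrightarrow> leg_ell \<nu> u t > 0"
  using flow convex_initial by (cases "t = 0") (auto simp: inverse_curvature_flow_def)

lemma normal_velocity: "t > 0 \<Longrightarrow> dt X u t \<bullet> \<nu> u t = leg_beta X \<nu> u t / leg_ell \<nu> u t"
  using flow by (simp add: inverse_curvature_flow_def)

lemma C0C1_flow_has_du:
  assumes "C0C1_flow f" "t \<ge> 0"
  shows "((\<lambda>s. f s t) has_vector_derivative du f u t) (at u)"
  using assms vector_derivative_works unfolding C0C1_flow_def du_def by blast

lemma X_has_du: "t \<ge> 0 \<Longrightarrow> ((\<lambda>s. X s t) has_vector_derivative du X u t) (at u)"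
  and nu_has_du: "t \<ge> 0 \<Longrightarrow> ((\<lambda>s. \<nu> s t) has_vector_derivative du \<nu> u t) (at u)"
  using legendre C0C1_flow_has_du by (auto simp: legendre_flow_def)

lemma continuous_on_nu: "continuous_on closed_half_plane (case_prod \<nu>)"
  and continuous_on_du_nu: "continuous_on closed_half_plane (\<lambda>(u, t). du \<nu> u t)"
  using legendre by (simp_all add: legendre_flow_def C0C1_flow_def)

lemma continuous_on_ell: "continuous_on closed_half_plane (\<lambda>(u, t). leg_ell \<nu> u t)"
  unfolding leg_ell_def Jrot_def case_prod_unfold
  using continuous_on_nu continuous_on_du_nu unfolding case_prod_unfold
  by (intro continuous_intros)

definition angle :: "real \<times> real \<Rightarrow> real" where
  "angle = (SOME \<theta>. continuous_on closed_half_plane \<theta> \<and>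
     (\<forall>p\<in>closed_half_plane. case_prod \<nu> p = cis (\<theta> p)))"

lemma continuous_on_angle: "continuous_on closed_half_plane angle"
  and nu_eq_cis_angle: "p \<in> closed_half_plane \<Longrightarrow> case_prod \<nu> p = cis (angle p)"
proof -
  have "\<exists>\<theta>. continuous_on closed_half_plane \<theta> \<and> (\<forall>p\<in>closed_half_plane. case_prod \<nu> p = cis (\<theta> p))"
    using continuous_angle_exists[OF convex_Times[OF convex_UNIV convex_real_interval(1)] continuous_on_nu]
      norm_nu by (metis SigmaE atLeast_iff case_prod_conv)
  from someI_ex[OF this]
  show "continuous_on closed_half_plane angle" "p \<in> closed_half_plane \<Longrightarrow> case_prod \<nu> p = cis (angle p)"
    unfolding angle_def[symmetric] by blast+
qed

lemma continuous_on_angle_compose: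
  assumes "continuous_on S c" "\<And>s. s \<in> S \<Longrightarrow> c s \<in> closed_half_plane"
  shows "continuous_on S (\<lambda>s. angle (c s))"
  using continuous_on_compose2[OF continuous_on_angle assms(1)] assms(2) by blast

lemma angle_has_du:
  assumes "t \<ge> 0"
  shows "((\<lambda>v. angle (v, t)) has_real_derivative leg_ell \<nu> u t) (at u)"
  unfolding leg_ell_def
proof (rule has_real_derivative_continuous_angle[where U=UNIV and f="\<lambda>s. \<nu> s t"])
  have "continuous_on UNIV (\<lambda>v. angle (v, t))"
    using assms by (intro continuous_on_angle_compose continuous_intros) auto
  then show "isCont (\<lambda>v. angle (v, t)) u"
    by (simp add: continuous_on_eq_continuous_at)
qed (use assms nu_has_du nu_eq_cis_angle in auto)

lemma angle_has_dt: "t > 0 \<Longrightarrow> ((\<lambda>s. angle (u, s)) has_real_derivative dt \<nu> u t \<bullet> Jrot (\<nu> u t)) (at t)"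
proof (rule has_real_derivative_continuous_angle[where U="{0<..}" and f="\<lambda>s. \<nu> u s"])
  assume "t > 0"
  have "continuous_on {0<..} (\<lambda>s. angle (u, s))"
    by (intro continuous_on_angle_compose continuous_intros) auto
  then show "isCont (\<lambda>s. angle (u, s)) t"
    using \<open>t > 0\<close> by (simp add: continuous_on_eq_continuous_at)
  show "((\<lambda>s. \<nu> u s) has_vector_derivative dt \<nu> u t) (at t)"
    using has_vector_derivative_pd2[OF smooth_on2D(2)[OF smooth_nu], of "(u, t)" True] \<open>t > 0\<close>
    by (simp add: dt_eq_pd2)
qed (use nu_eq_cis_angle in auto)

lemma angle_has_pd2:
  assumes "p \<in> half_plane"
  shows "((\<lambda>s. angle (line2 d p s)) has_real_derivative
    pd2 d (case_prod \<nu>) p \<bullet> Jrot (case_prod \<nu> p)) (at (coord2 d p))"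
  using assms angle_has_du angle_has_dt
  by (cases p; cases d) (auto simp: leg_ell_def du_eq_pd2 dt_eq_pd2)

lemma smooth_angle: "smooth_on2 half_plane angle"
proof (rule smooth_on2_from_partials)
  show "open half_plane"
    by (simp add: open_Times)
  show "continuous_on half_plane angle"
    using continuous_on_angle by (rule continuous_on_subset) auto
  show "smooth_on2 half_plane (\<lambda>p. pd2 d (case_prod \<nu>) p \<bullet> Jrot (case_prod \<nu> p))" for d
    unfolding Jrot_def
    by (intro smooth_on2_inner smooth_on2_mult smooth_on2_const smooth_nu smooth_on2D(3)[OF smooth_nu])
      (simp_all add: open_Times)
qed (use angle_has_pd2 in \<open>auto simp: has_real_derivative_iff_has_vector_derivative\<close>)

lemma pd2_angle: "p \<in> half_plane \<Longrightarrow> pd2 d angle p = pd2 d (case_prod \<nu>) p \<bullet> Jrot (case_prod \<nu> p)"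
  using angle_has_pd2 by (intro pd2_eqI) (simp add: has_real_derivative_iff_has_vector_derivative)

lemma pd2_False_angle: "t > 0 \<Longrightarrow> pd2 False angle (v, t) = leg_ell \<nu> v t"
  by (simp add: pd2_angle leg_ell_def du_eq_pd2)

lemma pd2_nu: "p \<in> half_plane \<Longrightarrow> pd2 d (case_prod \<nu>) p = pd2 d angle p *\<^sub>R Jrot (case_prod \<nu> p)"
proof -
  assume p: "p \<in> half_plane"
  have "pd2 d (case_prod \<nu>) p = pd2 d (\<lambda>q. cis (angle q)) p"
    using nu_eq_cis_angle by (intro pd2_cong_open[OF _ p]) (auto simp: open_Times)
  also have "\<dots> = pd2 d angle p *\<^sub>R Jrot (cis (angle p))"
    using has_real_derivative_pd2[OF smooth_on2D(2)[OF smooth_angle] p, of d]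
    by (intro pd2_eqI)
      (auto simp: Jrot_def has_vector_derivative_def has_field_derivative_def
        intro!: derivative_eq_intros)
  finally show ?thesis
    using nu_eq_cis_angle[of p] p by auto
qed

lemma angle_strict_mono:
  assumes "t \<ge> 0" "v < w"
  shows "angle (v, t) < angle (w, t)"
proof (rule DERIV_pos_imp_increasing[OF assms(2)])
  fix x
  show "\<exists>y. ((\<lambda>v. angle (v, t)) has_real_derivative y) (at x) \<and> 0 < y"
    using angle_has_du[OF assms(1)] ell_pos[OF assms(1)] by blast
qed

definition rotation_index :: nat where
  "rotation_index = nat \<lfloor>(angle (2 * pi, 0) - angle (0, 0)) / (2 * pi)\<rfloor>"

text \<open>The increment of the angle over one period is \<open>2\<pi>\<close> times an integer that depends
  continuously on \<open>(u, t)\<close>, hence is the same for all \<open>u\<close> and \<open>t\<close>; it is positive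
  because the angle increases.\<close>

lemma angle_shift: "t \<ge> 0 \<Longrightarrow> angle (v + 2 * pi, t) = angle (v, t) + 2 * pi * rotation_index"
proof -
  assume "t \<ge> 0"
  define k where "k p = (angle (fst p + 2 * pi, snd p) - angle p) / (2 * pi)" for p
  have k_Ints: "k (u, s) \<in> \<int>" if "s \<ge> 0" for u s
  proof -
    have "cis (angle (u + 2 * pi, s)) = cis (angle (u, s))"
      using nu_eq_cis_angle[of "(u, s)"] nu_eq_cis_angle[of "(u + 2 * pi, s)"] nu_periodic[of s u] that
      by simp
    then have "sin (angle (u + 2 * pi, s)) = sin (angle (u, s)) \<and>
        cos (angle (u + 2 * pi, s)) = cos (angle (u, s))"
      by (simp add: complex_eq_iff)
    then obtain m :: int where "angle (u + 2 * pi, s) = angle (u, s) + 2 * pi * m"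
      unfolding sin_cos_eq_iff by blast
    then show ?thesis
      by (simp add: k_def)
  qed
  have "continuous_on closed_half_plane (\<lambda>p. angle (fst p + 2 * pi, snd p))"
    by (rule continuous_on_angle_compose) (auto intro!: continuous_intros)
  then have "continuous_on closed_half_plane k"
    unfolding k_def using continuous_on_angle by (intro continuous_intros) auto
  moreover have "connected closed_half_plane"
    by (simp add: convex_connected convex_Times)
  ultimately have k_const: "k (v, t) = k (0, 0)"
    using continuous_on_Ints_imp_constant[of closed_half_plane k "(v, t)" "(0, 0)"] k_Ints \<open>t \<ge> 0\<close>
    by force
  obtain m :: int where "k (0, 0) = of_int m"
    using k_Ints[of 0 0] Ints_cases by auto
  moreover have "k (0, 0) > 0"
    using angle_strict_mono[of 0 0 "2 * pi"] by (simp add: k_def)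
  moreover have "rotation_index = nat \<lfloor>k (0, 0)\<rfloor>"
    by (simp add: rotation_index_def k_def)
  ultimately have "k (0, 0) = rotation_index"
    by simp
  then show ?thesis
    using k_const by (simp add: k_def field_simps)
qed

lemma rotation_index_pos: "rotation_index > 0"
  using angle_shift[of 0 0] angle_strict_mono[of 0 0 "2 * pi"] pi_gt_zero by (simp add: zero_less_mult_iff)

lemma angle_surj: "t \<ge> 0 \<Longrightarrow> \<exists>v. angle (v, t) = w"
proof -
  assume t: "t \<ge> 0"
  let ?g = "\<lambda>v. angle (v, t) - real rotation_index * v"
  have cont: "continuous_on UNIV (\<lambda>v. angle (v, t))"
    using t by (intro continuous_on_angle_compose continuous_intros) auto
  have "continuous_on UNIV ?g"
    using cont by (intro continuous_intros)
  moreover have "?g (v + 2 * pi) = ?g v" for v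
    using angle_shift[OF t] by (simp add: algebra_simps)
  moreover have "2 * pi > 0"
    by simp
  ultimately obtain B where "\<And>v. norm (?g v) \<le> B"
    using periodic_continuous_bounded[of "2 * pi" ?g] by blast
  then show ?thesis
    using surj_if_close_to_linear[OF cont, of rotation_index B w] rotation_index_pos by auto
qed

definition angle_inverse :: "real \<times> real \<Rightarrow> real" where
  "angle_inverse = (\<lambda>(w, t). THE v. angle (v, t) = w)"

lemma angle_inj: "t \<ge> 0 \<Longrightarrow> angle (v, t) = angle (v', t) \<Longrightarrow> v = v'"
  using angle_strict_mono[of t v v'] angle_strict_mono[of t v' v] by (cases v v' rule: linorder_cases) auto

lemma angle_angle_inverse: "t \<ge> 0 \<Longrightarrow> angle (angle_inverse (w, t), t) = w"
proof -
  assume t: "t \<ge> 0"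
  then have "\<exists>!v. angle (v, t) = w"
    using angle_surj angle_inj by metis
  from theI'[OF this] show ?thesis
    unfolding angle_inverse_def by simp
qed

lemma angle_inverse_eqI: "t \<ge> 0 \<Longrightarrow> angle (v, t) = w \<Longrightarrow> angle_inverse (w, t) = v"
  using angle_angle_inverse angle_inj by metis

lemma continuous_on_angle_inverse: "continuous_on closed_half_plane angle_inverse"
  by (rule continuous_on_inverse_in_fst[OF continuous_on_angle])
    (simp_all add: angle_strict_mono angle_angle_inverse)

lemma continuous_angle_inverse_at: "t \<ge> 0 \<Longrightarrow> isCont (\<lambda>w. angle_inverse (w, t)) w"
  using continuous_on_compose2[OF continuous_on_angle_inverse, of UNIV "\<lambda>w. (w, t)"]
  by (auto simp: continuous_on_eq_continuous_at intro: continuous_intros)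

lemma angle_inverse_has_du:
  assumes "t \<ge> 0"
  shows "((\<lambda>w. angle_inverse (w, t)) has_real_derivative 1 / leg_ell \<nu> (angle_inverse (w, t)) t) (at w)"
  using DERIV_inverse_function[where f="\<lambda>v. angle (v, t)" and a="w - 1" and b="w + 1",
      OF angle_has_du[OF assms] _ _ _ _ continuous_angle_inverse_at[OF assms]]
    ell_pos[OF assms] angle_angle_inverse[OF assms]
  by (simp add: divide_inverse less_imp_neq[symmetric])

lemma angle_inverse_has_dt:
  assumes "t > 0"
  shows "((\<lambda>s. angle_inverse (w, s)) has_real_derivative
    - pd2 True angle (angle_inverse (w, t), t) / pd2 False angle (angle_inverse (w, t), t)) (at t)"
proof -
  let ?q = "(angle_inverse (w, t), t)"
  have "(angle has_derivative (\<lambda>(a, b). a * pd2 False angle ?q + b * pd2 True angle ?q)) (at ?q)"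
    using smooth_on2_has_derivative[OF _ smooth_angle, of ?q] assms by (simp add: open_Times)
  moreover have "pd2 False angle ?q \<noteq> 0"
    using pd2_False_angle ell_pos assms by (metis less_imp_le less_irrefl)
  moreover have "continuous_on half_plane angle_inverse"
    using continuous_on_angle_inverse by (rule continuous_on_subset) auto
  then have "isCont angle_inverse (w, t)"
    using assms by (simp add: continuous_on_eq_continuous_at open_Times)
  ultimately have "(angle_inverse has_derivative
      (\<lambda>(a, b). (a - b * pd2 True angle ?q) / pd2 False angle ?q)) (at (w, t))"
    using angle_angle_inverse assms
    by (intro has_derivative_inverse_in_fst[where T=half_plane]) (auto simp: open_Times)
  from has_derivative_compose[OF has_derivative_Pair[OF has_derivative_const has_derivative_ident] this]
  have "((\<lambda>s. angle_inverse (w, s)) has_derivative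
      (\<lambda>h. (0 - h * pd2 True angle ?q) / pd2 False angle ?q)) (at t)"
    by (simp add: comp_def)
  moreover have "(\<lambda>h. (0 - h * pd2 True angle ?q) / pd2 False angle ?q) =
      (*) (- pd2 True angle ?q / pd2 False angle ?q)"
    by (auto simp: fun_eq_iff)
  ultimately show ?thesis
    by (simp add: has_field_derivative_def)
qed

lemma half_plane_subset: "half_plane \<subseteq> closed_half_plane"
  by (intro Sigma_mono) auto

definition reparam :: "real \<Rightarrow> real \<Rightarrow> real" where
  "reparam u t = angle_inverse (real rotation_index * u - pi / 2, t)"

lemma angle_reparam: "t \<ge> 0 \<Longrightarrow> angle (reparam u t, t) = real rotation_index * u - pi / 2"
  by (simp add: reparam_def angle_angle_inverse)

lemma reparam_periodic: "t \<ge> 0 \<Longrightarrow> reparam (u + 2 * pi) t = reparam u t + 2 * pi"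
proof -
  assume t: "t \<ge> 0"
  have "angle (reparam u t + 2 * pi, t) = angle (reparam u t, t) + 2 * pi * rotation_index"
    by (rule angle_shift[OF t])
  also have "\<dots> = real rotation_index * (u + 2 * pi) - pi / 2"
    using angle_reparam[OF t] by (simp add: algebra_simps)
  finally show ?thesis
    unfolding reparam_def by (intro angle_inverse_eqI t)
qed

lemma nu_reparam_Complex:
  "t \<ge> 0 \<Longrightarrow> \<nu> (reparam u t) t = Complex (sin (real rotation_index * u)) (- cos (real rotation_index * u))"
  using nu_eq_cis_angle[of "(reparam u t, t)"] angle_reparam[of t u]
  by (simp add: cis.ctr cos_diff sin_diff)

lemma continuous_on_reparam: "continuous_on closed_half_plane (\<lambda>(u, t). reparam u t)"
  unfolding reparam_def case_prod_unfold
  by (rule continuous_on_compose2[OF continuous_on_angle_inverse]) (auto intro!: continuous_intros)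

lemma reparam_has_du:
  assumes "t \<ge> 0"
  shows "((\<lambda>v. reparam v t) has_real_derivative rotation_index / leg_ell \<nu> (reparam u t) t) (at u)"
proof -
  have "((\<lambda>v. real rotation_index * v - pi / 2) has_real_derivative rotation_index) (at u)"
    by (auto intro!: derivative_eq_intros)
  from DERIV_chain2[OF angle_inverse_has_du[OF assms] this]
  show ?thesis
    by (simp add: reparam_def)
qed

lemma reparam_has_dt:
  "t > 0 \<Longrightarrow> ((\<lambda>s. reparam u s) has_real_derivative
    - pd2 True angle (reparam u t, t) / pd2 False angle (reparam u t, t)) (at t)"
  unfolding reparam_def by (rule angle_inverse_has_dt)

lemma du_reparam: "t \<ge> 0 \<Longrightarrow> du reparam u t = rotation_index / leg_ell \<nu> (reparam u t) t"
  using reparam_has_du unfolding du_def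
  by (simp add: has_real_derivative_iff_has_vector_derivative vector_derivative_at)

lemma C0C1_reparam: "C0C1_flow reparam"
  unfolding C0C1_flow_def
proof (intro conjI allI impI)
  show "(\<lambda>v. reparam v t) differentiable (at u)" if "t \<ge> 0" for t u
    using reparam_has_du[OF that] real_differentiable_def by blast
  show "continuous_on closed_half_plane (\<lambda>(u, t). reparam u t)"
    by (rule continuous_on_reparam)
  have "continuous_on closed_half_plane (\<lambda>p. (reparam (fst p) (snd p), snd p))"
    using continuous_on_reparam by (auto intro!: continuous_intros simp: case_prod_unfold)
  then have "continuous_on closed_half_plane (\<lambda>p. leg_ell \<nu> (reparam (fst p) (snd p)) (snd p))"
    using continuous_on_compose2[OF continuous_on_ell] by (force simp: case_prod_unfold)
  then have "continuous_on closed_half_plane (\<lambda>p. rotation_index / leg_ell \<nu> (reparam (fst p) (snd p)) (snd p))"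
    using ell_pos by (intro continuous_intros) (auto simp: less_imp_neq[symmetric])
  then show "continuous_on closed_half_plane (\<lambda>(u, t). du reparam u t)"
    by (rule continuous_on_eq) (auto simp: du_reparam)
qed

lemma smooth_reparam: "smooth_on2 half_plane (\<lambda>(u, t). reparam u t)"
proof -
  have "open half_plane"
    by (simp add: open_Times)
  define H where "H d = (if d then (\<lambda>p. - pd2 True angle p * (1 / pd2 False angle p))
    else (\<lambda>p. rotation_index * (1 / pd2 False angle p)))" for d
  have inv: "smooth_on2 half_plane (\<lambda>p. 1 / pd2 False angle p)"
    using ell_pos \<open>open half_plane\<close>
    by (intro smooth_on2_inverse smooth_on2D(3)[OF smooth_angle]) (auto simp: pd2_False_angle less_imp_neq[symmetric])
  have "smooth_on2 half_plane (\<lambda>p. - pd2 True angle p * (1 / pd2 False angle p))"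
    by (intro smooth_on2_mult smooth_on2_uminus smooth_on2D(3)[OF smooth_angle] inv \<open>open half_plane\<close>)
  moreover have "smooth_on2 half_plane (\<lambda>p. rotation_index * (1 / pd2 False angle p))"
    by (intro smooth_on2_mult smooth_on2_const inv \<open>open half_plane\<close>)
  ultimately have "smooth_on2 half_plane (H d)" for d
    by (cases d) (simp_all add: H_def)
  then have "smooth_on2 half_plane (\<lambda>p. fst (reparam (fst p) (snd p), snd p))"
  proof (intro smooth_on2_compose_space_change[OF \<open>open half_plane\<close>] smooth_on2_fst)
    show "continuous_on half_plane (\<lambda>p. reparam (fst p) (snd p))"
      using continuous_on_subset[OF continuous_on_reparam, of half_plane] half_plane_subset
      by (simp add: case_prod_unfold)
    fix d and p :: "real \<times> real" assume "p \<in> half_plane"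
    then show "((\<lambda>s. reparam (fst (line2 d p s)) (snd (line2 d p s))) has_real_derivative
        H d (reparam (fst p) (snd p), snd p)) (at (coord2 d p))"
      using reparam_has_du reparam_has_dt
      by (cases p; cases d) (auto simp: H_def pd2_False_angle divide_inverse)
  qed (auto simp: open_Times)
  then show ?thesis
    by (simp add: case_prod_unfold)
qed

abbreviation X_reparam :: "real \<Rightarrow> real \<Rightarrow> complex" where
  "X_reparam \<equiv> \<lambda>u t. X (reparam u t) t"

abbreviation nu_reparam :: "real \<Rightarrow> real \<Rightarrow> complex" where
  "nu_reparam \<equiv> \<lambda>u t. \<nu> (reparam u t) t"

lemma nu_reparam_eq: "t \<ge> 0 \<Longrightarrow> nu_reparam u t = - \<i> * cis (real rotation_index * u)"
  by (simp add: nu_reparam_Complex complex_eq_iff)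

lemma leg_ell_reparam: "t \<ge> 0 \<Longrightarrow> leg_ell nu_reparam u t = rotation_index"
proof -
  assume t: "t \<ge> 0"
  have "((\<lambda>v. - \<i> * cis (real rotation_index * v)) has_vector_derivative
      real rotation_index *\<^sub>R cis (real rotation_index * u)) (at u)"
    unfolding has_vector_derivative_def
    by (auto intro!: derivative_eq_intros simp: algebra_simps fun_eq_iff)
  moreover have "(\<lambda>v. nu_reparam v t) = (\<lambda>v. - \<i> * cis (real rotation_index * v))"
    using nu_reparam_eq[OF t] by auto
  ultimately have "du nu_reparam u t = real rotation_index *\<^sub>R cis (real rotation_index * u)"
    unfolding du_def by (simp add: vector_derivative_at)
  then have "leg_ell nu_reparam u t =
      (real rotation_index *\<^sub>R cis (real rotation_index * u)) \<bullet> cis (real rotation_index * u)"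
    using nu_reparam_eq[OF t] by (simp add: leg_ell_def Jrot_def)
  then show ?thesis
    by (simp add: dot_square_norm)
qed

lemma leg_beta_reparam:
  "t \<ge> 0 \<Longrightarrow> leg_beta X_reparam nu_reparam u t =
    rotation_index / leg_ell \<nu> (reparam u t) t * leg_beta X \<nu> (reparam u t) t"
proof -
  assume t: "t \<ge> 0"
  have "((\<lambda>v. X (reparam v t) t) has_vector_derivative
      (rotation_index / leg_ell \<nu> (reparam u t) t) *\<^sub>R du X (reparam u t) t) (at u)"
    using vector_diff_chain_at[OF _ X_has_du[OF t], of "\<lambda>v. reparam v t"] reparam_has_du[OF t]
    by (simp add: has_real_derivative_iff_has_vector_derivative comp_def)
  then show ?thesis
    by (simp add: leg_beta_def du_def vector_derivative_at)
qed

definition normal_speed :: "real \<times> real \<Rightarrow> real" where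
  "normal_speed p = pd2 True (case_prod X) p \<bullet> case_prod \<nu> p"

lemma normal_speed_eq: "t > 0 \<Longrightarrow> normal_speed (v, t) = leg_beta X \<nu> v t / leg_ell \<nu> v t"
  using normal_velocity by (simp add: normal_speed_def dt_eq_pd2)

lemma leg_beta_reparam_normal_speed:
  "t > 0 \<Longrightarrow> leg_beta X_reparam nu_reparam u t = rotation_index * normal_speed (reparam u t, t)"
  by (simp add: leg_beta_reparam normal_speed_eq)

lemma smooth_normal_speed: "smooth_on2 half_plane normal_speed"
  unfolding normal_speed_def[abs_def]
  by (intro smooth_on2_inner smooth_on2D(3)[OF smooth_X] smooth_nu) (simp add: open_Times)

lemma du_X_eq: "t \<ge> 0 \<Longrightarrow> du X v t = leg_beta X \<nu> v t *\<^sub>R Jrot (\<nu> v t)"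
  using frame_decomposition[OF norm_nu, of t "du X v t" v] legendre_condition
  by (simp add: leg_beta_def)

text \<open>Differentiating \<open>\<langle>\<partial>\<^sub>t X, \<nu>\<rangle>\<close> in \<open>u\<close>: the mixed derivative of \<open>X\<close> is controlled by
  differentiating the Legendre condition \<open>\<langle>\<partial>\<^sub>u X, \<nu>\<rangle> = 0\<close> in \<open>t\<close>.\<close>

lemma pd2_normal_speed:
  assumes "t > 0"
  shows "pd2 False normal_speed (v, t) =
    leg_ell \<nu> v t * (dt X v t \<bullet> Jrot (\<nu> v t)) - leg_beta X \<nu> v t * pd2 True angle (v, t)"
proof -
  let ?q = "(v, t)" and ?X = "case_prod X" and ?N = "case_prod \<nu>"
  have S: "open half_plane" and q: "?q \<in> half_plane"
    using assms by (auto simp: open_Times)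
  note pdX = smooth_on2D(2)[OF smooth_X] and pdN = smooth_on2D(2)[OF smooth_nu]
  have jrot: "Jrot z \<bullet> Jrot z = 1" if "norm z = 1" for z
    using that by (simp add: Jrot_def dot_square_norm norm_mult)
  have "pd2 True (\<lambda>p. pd2 False ?X p \<bullet> ?N p) ?q = 0"
    using legendre_condition by (intro pd2_const_on_open[OF S q]) (auto simp: du_eq_pd2)
  then have "pd2 True (pd2 False ?X) ?q \<bullet> \<nu> v t = - (pd2 False ?X ?q \<bullet> pd2 True ?N ?q)"
    using pd2_inner[OF smooth_on2D(2)[OF smooth_on2D(3)[OF smooth_X]] pdN q] by simp
  also have "\<dots> = - (leg_beta X \<nu> v t * pd2 True angle ?q)"
    using du_X_eq[of t v] pd2_nu[OF q, of True] jrot[OF norm_nu] assms by (simp add: du_eq_pd2)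
  finally have mixed: "pd2 False (pd2 True ?X) ?q \<bullet> \<nu> v t = - (leg_beta X \<nu> v t * pd2 True angle ?q)"
    using pd2_commute[OF S smooth_X q] by simp
  have "pd2 False normal_speed ?q = pd2 True ?X ?q \<bullet> pd2 False ?N ?q + pd2 False (pd2 True ?X) ?q \<bullet> ?N ?q"
    unfolding normal_speed_def[abs_def]
    by (rule pd2_inner[OF smooth_on2D(2)[OF smooth_on2D(3)[OF smooth_X]] pdN q])
  then show ?thesis
    using mixed pd2_nu[OF q, of False] pd2_False_angle[OF assms] by (simp add: dt_eq_pd2)
qed

lemma du_leg_beta_reparam:
  assumes "t > 0"
  shows "du (leg_beta X_reparam nu_reparam) u t =
    rotation_index * pd2 False normal_speed (reparam u t, t) * rotation_index / leg_ell \<nu> (reparam u t) t"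
proof -
  have "((\<lambda>v. normal_speed (v, t)) has_real_derivative pd2 False normal_speed (reparam u t, t)) (at (reparam u t))"
    using has_real_derivative_pd2[OF smooth_on2D(2)[OF smooth_normal_speed], of "(reparam u t, t)" False] assms
    by simp
  from DERIV_cmult[OF DERIV_chain2[OF this reparam_has_du], of "real rotation_index"]
  have "((\<lambda>u. rotation_index * normal_speed (reparam u t, t)) has_real_derivative
      rotation_index * (pd2 False normal_speed (reparam u t, t) * (rotation_index / leg_ell \<nu> (reparam u t) t)))
      (at u)"
    using assms by simp
  moreover have "(\<lambda>u. leg_beta X_reparam nu_reparam u t) = (\<lambda>u. rotation_index * normal_speed (reparam u t, t))"
    using leg_beta_reparam_normal_speed[OF assms] by auto
  ultimately show ?thesis
    by (simp add: du_def has_real_derivative_iff_has_vector_derivative vector_derivative_at)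
qed

lemma dt_X_reparam:
  assumes "t > 0"
  shows "dt X_reparam u t = dt X (reparam u t) t -
    (pd2 True angle (reparam u t, t) / leg_ell \<nu> (reparam u t) t) *\<^sub>R du X (reparam u t) t"
proof -
  let ?q = "(reparam u t, t)"
  have "(case_prod X has_derivative (\<lambda>(a, b). a *\<^sub>R pd2 False (case_prod X) ?q + b *\<^sub>R pd2 True (case_prod X) ?q))
      (at ((\<lambda>s. (reparam u s, s)) t))"
    using smooth_on2_has_derivative[OF _ smooth_X, of ?q] assms by (simp add: open_Times)
  moreover have "((\<lambda>s. (reparam u s, s)) has_vector_derivative
      (- pd2 True angle ?q / pd2 False angle ?q, 1)) (at t)"
    using reparam_has_dt[OF assms, of u]
    by (auto intro!: has_vector_derivative_Pair derivative_eq_intros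
        simp: has_real_derivative_iff_has_vector_derivative)
  ultimately have "((\<lambda>s. X (reparam u s) s) has_vector_derivative
      (- pd2 True angle ?q / pd2 False angle ?q) *\<^sub>R pd2 False (case_prod X) ?q + 1 *\<^sub>R pd2 True (case_prod X) ?q) (at t)"
    using has_vector_derivative_compose_plane by fastforce
  then have "dt X_reparam u t = pd2 True (case_prod X) ?q -
      (pd2 True angle ?q / leg_ell \<nu> (reparam u t) t) *\<^sub>R pd2 False (case_prod X) ?q"
    using assms by (simp add: dt_def vector_derivative_at pd2_False_angle)
  then show ?thesis
    by (simp add: du_eq_pd2 dt_eq_pd2)
qed

lemma dt_X_reparam_eq:
  assumes "t > 0"
  shows "dt X_reparam u t =
    (leg_beta X_reparam nu_reparam u t / leg_ell nu_reparam u t) *\<^sub>R nu_reparam u t +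
    (du (leg_beta X_reparam nu_reparam) u t / (leg_ell nu_reparam u t)\<^sup>2) *\<^sub>R Jrot (nu_reparam u t)"
proof -
  let ?v = "reparam u t"
  define L B P V where "L = leg_ell \<nu> ?v t" and "B = leg_beta X \<nu> ?v t"
    and "P = pd2 True angle (?v, t)" and "V = dt X ?v t"
  have n: "real rotation_index > 0" and L: "L > 0"
    using rotation_index_pos ell_pos assms by (auto simp: L_def)
  have "V = (V \<bullet> \<nu> ?v t) *\<^sub>R \<nu> ?v t + (V \<bullet> Jrot (\<nu> ?v t)) *\<^sub>R Jrot (\<nu> ?v t)"
    using frame_decomposition[OF norm_nu] assms by simp
  then have "dt X_reparam u t = (B / L) *\<^sub>R \<nu> ?v t + ((L * (V \<bullet> Jrot (\<nu> ?v t)) - B * P) / L) *\<^sub>R Jrot (\<nu> ?v t)"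
    using dt_X_reparam[OF assms, of u] du_X_eq[of t ?v] normal_velocity[OF assms, of ?v] L assms
    by (simp add: L_def B_def P_def V_def diff_divide_distrib algebra_simps)
  moreover have "leg_ell nu_reparam u t = rotation_index"
    using leg_ell_reparam assms by simp
  moreover have "leg_beta X_reparam nu_reparam u t = rotation_index * (B / L)"
    using leg_beta_reparam[of t u] assms by (simp add: B_def L_def)
  moreover have "du (leg_beta X_reparam nu_reparam) u t =
      rotation_index * rotation_index * ((L * (V \<bullet> Jrot (\<nu> ?v t)) - B * P) / L)"
    using du_leg_beta_reparam[OF assms, of u] pd2_normal_speed[OF assms, of ?v]
    by (simp add: L_def B_def P_def V_def)
  ultimately show ?thesis
    using n by (simp add: power2_eq_square)
qed

lemma continuous_on_initial_slice:
  assumes "continuous_on closed_half_plane f"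
  shows "continuous_on UNIV (\<lambda>u. f (u, 0))"
proof -
  have "range (\<lambda>u. (u, 0::real)) \<subseteq> closed_half_plane"
    by auto
  then show ?thesis
    using continuous_on_compose2[OF assms continuous_on_Pair[OF continuous_on_id continuous_on_const]]
    by blast
qed

lemma initial_ell_lower_bound:
  obtains m where "m > 0" "\<And>v. m \<le> leg_ell \<nu> v 0"
proof (rule periodic_continuous_pos_lower_bound[of "2 * pi" "\<lambda>v. leg_ell \<nu> v 0"])
  show "continuous_on UNIV (\<lambda>v. leg_ell \<nu> v 0)"
    using continuous_on_initial_slice[OF continuous_on_ell] by simp
  have "(\<lambda>u. \<nu> u 0) differentiable (at v)" for v
    using nu_has_du[of 0 v] differentiableI_vector by auto
  then show "leg_ell \<nu> (v + 2 * pi) 0 = leg_ell \<nu> v 0" for v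
    using vector_derivative_periodic[of "\<lambda>u. \<nu> u 0" "2 * pi"] nu_periodic
    by (simp add: leg_ell_def du_def)
qed (use ell_pos that in auto)

lemma reparam_initial_lipschitz:
  obtains K where "K \<ge> 0" "\<And>x y. \<bar>reparam x 0 - reparam y 0\<bar> \<le> K * \<bar>x - y\<bar>"
proof -
  obtain m where m: "m > 0" "\<And>v. m \<le> leg_ell \<nu> v 0"
    using initial_ell_lower_bound by blast
  have "norm (rotation_index / leg_ell \<nu> (reparam u 0) 0) \<le> rotation_index / m" for u
    using m ell_pos[of 0 "reparam u 0"] by (simp add: frac_le)
  moreover have "((\<lambda>u. reparam u 0) has_vector_derivative rotation_index / leg_ell \<nu> (reparam u 0) 0) (at u)" for u
    using reparam_has_du[of 0 u] by (simp add: has_real_derivative_iff_has_vector_derivative)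
  ultimately have "\<bar>reparam x 0 - reparam y 0\<bar> \<le> (rotation_index / m) * \<bar>x - y\<bar>" for x y
    using lipschitz_if_bounded_vector_derivative[of "\<lambda>u. reparam u 0"
        "\<lambda>u. rotation_index / leg_ell \<nu> (reparam u 0) 0" "rotation_index / m" x y]
    by simp
  then show ?thesis
    using m(1) by (intro that[of "rotation_index / m"]) auto
qed

lemma C1alpha_reparam_initial:
  assumes a: "0 < a" "a \<le> 1" and nu0: "C1alpha a (\<lambda>u. \<nu> u 0)"
  shows "C1alpha a (\<lambda>u. reparam u 0)"
  unfolding C1alpha_def
proof (intro conjI allI)
  have deriv: "vector_derivative (\<lambda>u. reparam u 0) (at u) = rotation_index / leg_ell \<nu> (reparam u 0) 0" for u
    using du_reparam[of 0 u] by (simp add: du_def)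
  show "(\<lambda>u. reparam u 0) differentiable (at u)" for u
    using reparam_has_du[of 0 u] real_differentiable_def by auto
  have "continuous_on UNIV (\<lambda>u. du reparam u 0)"
    using continuous_on_initial_slice[of "\<lambda>(u, t). du reparam u t"] C0C1_reparam
    by (simp add: C0C1_flow_def)
  then show "continuous_on UNIV (\<lambda>u. vector_derivative (\<lambda>u. reparam u 0) (at u))"
    by (simp add: du_def)
  have "holder a (\<lambda>v. leg_ell \<nu> v 0)"
    using holder_curvature_of_unit_curve[OF a nu0] nu_periodic norm_nu
    by (simp add: leg_ell_def du_def)
  moreover obtain m where "m > 0" "\<And>v. m \<le> leg_ell \<nu> v 0"
    using initial_ell_lower_bound by blast
  ultimately have "holder a (\<lambda>v. rotation_index / leg_ell \<nu> v 0)"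
    by (intro holder_divide) auto
  moreover obtain K where "K \<ge> 0" "\<And>x y. \<bar>reparam x 0 - reparam y 0\<bar> \<le> K * \<bar>x - y\<bar>"
    using reparam_initial_lipschitz by blast
  ultimately show "holder a (\<lambda>u. vector_derivative (\<lambda>u. reparam u 0) (at u))"
    unfolding deriv by (rule holder_compose_lipschitz[OF a(1)])
qed

end

theorem proposition3p2:
  fixes \<alpha> :: real
    and F :: "real \<Rightarrow> real \<Rightarrow> real"
    and X \<nu> :: "real \<Rightarrow> real \<Rightarrow> complex"
    and X0 \<nu>0 :: "real \<Rightarrow> complex"
  assumes "0 < \<alpha>" "\<alpha> < 1"
    and "smooth_flow F" "\<forall>t>0. \<forall>u. F (u + 2*pi) t = F u t"
    and "C1alpha \<alpha> X0" "C1alpha \<alpha> \<nu>0"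
    and "\<forall>u. vector_derivative \<nu>0 (at u) \<bullet> Jrot (\<nu>0 u) > 0"
    and "\<forall>u. X u 0 = X0 u" "\<forall>u. \<nu> u 0 = \<nu>0 u"
    and "inverse_curvature_flow X \<nu>"
    and "\<forall>t>0. \<forall>u. dt X u t \<bullet> Jrot (\<nu> u t) =
            du (leg_beta X \<nu>) u t / (leg_ell \<nu> u t)\<^sup>2 + F u t * leg_beta X \<nu> u t"
  shows "\<exists>(n::nat) (\<phi>::real \<Rightarrow> real \<Rightarrow> real).
     C0C1_flow \<phi> \<and> smooth_flow \<phi> \<and> C1alpha \<alpha> (\<lambda>u. \<phi> u 0) \<and>
     (\<exists>d\<in>{1, -1::real}. \<forall>t\<ge>0. \<forall>u. \<phi> (u + 2*pi) t = \<phi> u t + 2*pi*d) \<and>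
     (\<forall>t\<ge>0. \<forall>u. du \<phi> u t \<noteq> 0) \<and>
     (let Xt = (\<lambda>u t. X (\<phi> u t) t); \<nu>t = (\<lambda>u t. \<nu> (\<phi> u t) t) in
       (\<forall>u. \<nu>t u 0 = Complex (sin (real n * u)) (- cos (real n * u))) \<and>
       (\<forall>t>0. \<forall>u. dt Xt u t =
           (leg_beta Xt \<nu>t u t / leg_ell \<nu>t u t) *\<^sub>R \<nu>t u t +
           (du (leg_beta Xt \<nu>t) u t / (leg_ell \<nu>t u t)\<^sup>2) *\<^sub>R Jrot (\<nu>t u t)))"
proof -
  have nu0: "\<nu>0 = (\<lambda>u. \<nu> u 0)"
    using assms(9) by auto
  then interpret convex_inverse_curvature_flow X \<nu>
    using assms(7,10) by unfold_locales (simp_all add: leg_ell_def du_def)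
  have "C1alpha \<alpha> (\<lambda>u. reparam u 0)"
    using C1alpha_reparam_initial assms(1,2,6) nu0 by simp
  moreover have "\<forall>t\<ge>0. \<forall>u. du reparam u t \<noteq> 0"
    using du_reparam ell_pos rotation_index_pos by (simp add: less_imp_neq[symmetric])
  ultimately show ?thesis
    using C0C1_reparam smooth_reparam reparam_periodic nu_reparam_Complex dt_X_reparam_eq
    by (intro exI[of _ rotation_index] exI[of _ reparam]) (auto simp: smooth_flow_def Let_def)
qed

end
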